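(* Let $n\ge2$, let $I\subseteq[0,\infty)$ be an interval with non-empty interior, let $\tilde{\mathbf{P}}$ be a generalized $n$-system on $I$, and let $D$ be a discrete subset of $I$. Then there exists an $n$-system $\mathbf{P}$ on $I$ such that $\mathbf{P}(t)=\tilde{\mathbf{P}}(t)$ for every $t\in D$.
   Context: Let $I\subseteq[0,\infty)$ be an interval with non-empty interior. A map $\mathbf{P}\colon I\to\mathbb{R}^n$ is continuous piecewise linear if it is continuous, the set $D$ of points of $I$ where it is not differentiable (including the endpoints of $I$ that lie in $I$) is discrete in $I$, and its derivative is locally constant on $I\setminus D$. An $n$-system on $I$ is a continuous piecewise linear map $\mathbf{P}=(P_1,\dots,P_n)\colon I\to\mathbb{R}^n$ such that: (S1) for each $q\in I$, $0\le P_1(q)\le\cdots\le P_n(q)$ and $P_1(q)+\cdots+P_n(q)=q$; (S2) on each non-empty open subinterval $H$ of $I$ on which $\mathbf{P}$ is differentiable, there is $r\in\{1,\dots,n\}$ such that $P_r$ has slope $1$ on $H$ and all $P_j$ with $j\ne r$ are constant on $H$; (S3) if $q$ is an interior point of $I$ where $\mathbf{P}$ is not differentiable and the integers $r,s$ with $P_r'(q^-)=P_s'(q^+)=1$ satisfy $r<s$, then $P_r(q)=P_{r+1}(q)=\cdots=P_s(q)$. A generalized $n$-system on $I$ is a continuous piecewise linear map $\mathbf{P}=(P_1,\dots,P_n)\colon I\to\mathbb{R}^n$ such that: (G1) for each $q\in I$, $0\le P_1(q)\le\cdots\le P_n(q)$ and $P_1(q)+\cdots+P_n(q)=q$; (G2)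 on each non-empty open subinterval $H$ of $I$ on which $\mathbf{P}$ is differentiable, there are integers $1\le \underline{r}\le\overline{r}\le n$ such that $P_{\underline r},\dots,P_{\overline r}$ coincide on $H$ and have slope $1/(\overline r-\underline r+1)$, while every other $P_j$ is constant on $H$; (G3) if $q$ is an interior point of $I$ where $\mathbf{P}$ is not differentiable, and $\underline r,\overline r,\underline s,\overline s$ are the integers with $P_j'(q^-)=1/(\overline r-\underline r+1)$ for $\underline r\le j\le\overline r$ and $P_j'(q^+)=1/(\overline s-\underline s+1)$ for $\underline s\le j\le \overline s$ (as in (G2) on the adjacent intervals), and if $\underline r<\overline s$, then $P_{\underline r}(q)=P_{\underline r+1}(q)=\cdots=P_{\overline s}(q)$. *)

theory Defs
  imports "HOL-Analysis.Analysis"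
begin

text \<open>Maps I -> R^n are represented as P :: real => nat => real, the
  j-th coordinate at q being P q j for j in {1..n}; values outside I and
  indices outside {1..n} are irrelevant.\<close>

definition discrete_in :: "real set \<Rightarrow> real set \<Rightarrow> bool" where
  "discrete_in D I \<longleftrightarrow> (\<forall>x\<in>I. \<exists>e>0. finite (D \<inter> ball x e))"

definition comp :: "(real \<Rightarrow> nat \<Rightarrow> real) \<Rightarrow> nat \<Rightarrow> real \<Rightarrow> real" where
  "comp P j = (\<lambda>t. P t j)"

definition nondiff_set :: "nat \<Rightarrow> real set \<Rightarrow> (real \<Rightarrow> nat \<Rightarrow> real) \<Rightarrow> real set" where
  "nondiff_set n I P = {q\<in>I. q \<in> frontier I \<or> \<not> (\<forall>j\<in>{1..n}. comp P j differentiable (at q))}"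

definition cont_pw_linear :: "nat \<Rightarrow> real set \<Rightarrow> (real \<Rightarrow> nat \<Rightarrow> real) \<Rightarrow> bool" where
  "cont_pw_linear n I P \<longleftrightarrow>
     (\<forall>j\<in>{1..n}. continuous_on I (comp P j)) \<and>
     discrete_in (nondiff_set n I P) I \<and>
     (\<forall>q\<in>I - nondiff_set n I P. \<exists>e>0. \<forall>x\<in>ball q e \<inter> I. x \<notin> nondiff_set n I P \<longrightarrow>
        (\<forall>j\<in>{1..n}. deriv (comp P j) x = deriv (comp P j) q))"

definition ordered_sum :: "nat \<Rightarrow> real set \<Rightarrow> (real \<Rightarrow> nat \<Rightarrow> real) \<Rightarrow> bool" where
  "ordered_sum n I P \<longleftrightarrow>
     (\<forall>q\<in>I. 0 \<le> P q 1 \<and> (\<forall>j\<in>{1..<n}. P q j \<le> P q (Suc j)) \<and> (\<Sum>j=1..n. P q j) = q)"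

definition diff_subinterval :: "nat \<Rightarrow> real set \<Rightarrow> (real \<Rightarrow> nat \<Rightarrow> real) \<Rightarrow> real set \<Rightarrow> bool" where
  "diff_subinterval n I P H \<longleftrightarrow> is_interval H \<and> open H \<and> H \<noteq> {} \<and> H \<subseteq> I \<and>
     (\<forall>q\<in>H. \<forall>j\<in>{1..n}. comp P j differentiable (at q))"

definition n_system :: "nat \<Rightarrow> real set \<Rightarrow> (real \<Rightarrow> nat \<Rightarrow> real) \<Rightarrow> bool" where
  "n_system n I P \<longleftrightarrow> cont_pw_linear n I P \<and> ordered_sum n I P \<and>
     (\<forall>H. diff_subinterval n I P H \<longrightarrow>
        (\<exists>r\<in>{1..n}. (\<forall>x\<in>H. \<forall>y\<in>H. P y r - P x r = y - x) \<and>
                    (\<forall>j\<in>{1..n}. j \<noteq> r \<longrightarrow> (\<forall>x\<in>H. \<forall>y\<in>H. P y j = P x j)))) \<and>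
     (\<forall>q\<in>interior I. q \<in> nondiff_set n I P \<longrightarrow>
        (\<forall>r\<in>{1..n}. \<forall>s\<in>{1..n}.
           (comp P r has_real_derivative 1) (at_left q) \<longrightarrow>
           (comp P s has_real_derivative 1) (at_right q) \<longrightarrow> r < s \<longrightarrow>
           (\<forall>j\<in>{r..s}. P q j = P q r)))"

definition gen_n_system :: "nat \<Rightarrow> real set \<Rightarrow> (real \<Rightarrow> nat \<Rightarrow> real) \<Rightarrow> bool" where
  "gen_n_system n I P \<longleftrightarrow> cont_pw_linear n I P \<and> ordered_sum n I P \<and>
     (\<forall>H. diff_subinterval n I P H \<longrightarrow>
        (\<exists>lr ur. 1 \<le> lr \<and> lr \<le> ur \<and> ur \<le> n \<and>
           (\<forall>j\<in>{lr..ur}. \<forall>x\<in>H. P x j = P x lr) \<and>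
           (\<forall>j\<in>{lr..ur}. \<forall>x\<in>H. \<forall>y\<in>H. P y j - P x j = (y - x) / real (ur - lr + 1)) \<and>
           (\<forall>j\<in>{1..n}. j \<notin> {lr..ur} \<longrightarrow> (\<forall>x\<in>H. \<forall>y\<in>H. P y j = P x j)))) \<and>
     (\<forall>q\<in>interior I. q \<in> nondiff_set n I P \<longrightarrow>
        (\<forall>lr ur ls us. 1 \<le> lr \<longrightarrow> lr \<le> ur \<longrightarrow> ur \<le> n \<longrightarrow> 1 \<le> ls \<longrightarrow> ls \<le> us \<longrightarrow> us \<le> n \<longrightarrow>
           (\<forall>j\<in>{lr..ur}. (comp P j has_real_derivative 1 / real (ur - lr + 1)) (at_left q)) \<longrightarrow>
           (\<forall>j\<in>{ls..us}. (comp P j has_real_derivative 1 / real (us - ls + 1)) (at_right q)) \<longrightarrow>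
           lr < us \<longrightarrow> (\<forall>j\<in>{lr..us}. P q j = P q lr)))"

end

theory Submission
  imports Defs
begin

text \<open>Mark the points of D, the points where the generalized system is not differentiable and,
  near each end of I that does not belong to I, a sequence converging to that end. The marks form a
  discrete set, so every point of I lies in a closed gap between two consecutive marks, and on each
  gap the generalized system moves one block of coordinates L..U jointly with slope 1/(U - L + 1).
  The new system agrees with the old one at the marks and, inside each gap, replaces the joint
  motion by a staircase in which the coordinates of the block reach their final values one at a
  time, the highest index first. Near every point only one coordinate then moves on each side, with
  slope 1; at a mark the system arrives moving coordinate L of the left block and leaves moving
  coordinate U of the right block, and (G3), or differentiability, which forces the two blocks to
  coincide, provides the equalities demanded by (S3).\<close>

section \<open>One-sided unit moves\<close>

text \<open>In use, S is one side {..<x} or {x<..} of x.\<close>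
definition unit_move :: "nat \<Rightarrow> real set \<Rightarrow> (real \<Rightarrow> nat \<Rightarrow> real) \<Rightarrow> real \<Rightarrow> real set \<Rightarrow> nat \<Rightarrow> bool" where
  "unit_move n I P x S r \<longleftrightarrow> r \<in> {1..n} \<and>
     (\<exists>e>0. \<forall>y\<in>S \<inter> ball x e. y \<in> I \<and> (\<forall>j\<in>{1..n}. P y j = P x j + (if j = r then y - x else 0)))"

lemma unit_moveD:
  assumes "unit_move n I P x S r"
  obtains e where "r \<in> {1..n}" "e > 0" "S \<inter> ball x e \<subseteq> I"
    "\<And>y j. y \<in> S \<inter> ball x e \<Longrightarrow> j \<in> {1..n} \<Longrightarrow> P y j = P x j + (if j = r then y - x else 0)"
  using assms unfolding unit_move_def by blast

lemma has_real_derivative_if_eventually_affine: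
  assumes "eventually (\<lambda>y. f y = f x + (y - x) * d) (at x within S)"
  shows "(f has_real_derivative d) (at x within S)"
proof -
  have "((\<lambda>y. f x + (y - x) * d) has_real_derivative d) (at x within S)"
    by (auto intro!: derivative_eq_intros)
  then show ?thesis
    using has_field_derivative_cong_eventually[of "\<lambda>y. f x + (y - x) * d" f] assms
    by (simp add: eq_commute)
qed

lemma affine_has_left_derivative:
  assumes "a < x" "\<And>y. y \<in> {a<..<x} \<Longrightarrow> f y = f x + (y - x) * d"
  shows "(f has_real_derivative d) (at_left x)"
  by (rule has_real_derivative_if_eventually_affine, rule eventually_mono[OF eventually_at_left_real])
    (use assms in auto)

lemma affine_has_right_derivative:
  assumes "x < b" "\<And>y. y \<in> {x<..<b} \<Longrightarrow> f y = f x + (y - x) * d"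
  shows "(f has_real_derivative d) (at_right x)"
  by (rule has_real_derivative_if_eventually_affine, rule eventually_mono[OF eventually_at_right_real])
    (use assms in auto)

lemma one_sided_derivatives_eq:
  assumes "f differentiable (at x)"
    and "(f has_real_derivative d1) (at_left x)" "(f has_real_derivative d2) (at_right x)"
  shows "d1 = d2"
proof -
  have D: "(f has_real_derivative deriv f x) (at x within S)" for S
    using assms(1) DERIV_deriv_iff_real_differentiable has_field_derivative_at_within by blast
  have "d1 = deriv f x" by (rule has_field_derivative_unique[OF assms(2) D]) simp
  moreover have "d2 = deriv f x" by (rule has_field_derivative_unique[OF assms(3) D]) simp
  ultimately show ?thesis by simp
qed

lemma unit_move_has_derivative:
  assumes "unit_move n I P x S r" "j \<in> {1..n}"
  shows "(comp P j has_real_derivative (if j = r then 1 else 0)) (at x within S)"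
proof (rule has_real_derivative_if_eventually_affine)
  obtain e where "r \<in> {1..n}" "e > 0" "S \<inter> ball x e \<subseteq> I"
    and affine: "\<And>y j. y \<in> S \<inter> ball x e \<Longrightarrow> j \<in> {1..n} \<Longrightarrow> P y j = P x j + (if j = r then y - x else 0)"
    using unit_moveD[OF assms(1)] by blast
  have "comp P j y = comp P j x + (y - x) * (if j = r then 1 else 0)" if "y \<in> S \<inter> ball x e" for y
    using affine[OF that assms(2)] by (simp add: comp_def)
  with \<open>e > 0\<close> show "eventually (\<lambda>y. comp P j y = comp P j x + (y - x) * (if j = r then 1 else 0)) (at x within S)"
    unfolding eventually_at by (auto simp: dist_commute)
qed

lemma unit_move_derivative_eq:
  assumes "at x within S \<noteq> bot" "unit_move n I P x S r" "j \<in> {1..n}"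
    and "(comp P j has_real_derivative D) (at x within S)"
  shows "D = (if j = r then 1 else 0)"
  using has_field_derivative_unique[OF assms(4) unit_move_has_derivative[OF assms(2,3)] assms(1)] .

lemma unit_move_unique:
  assumes "at x within S \<noteq> bot" "unit_move n I P x S r" "unit_move n I P x S r'"
  shows "r = r'"
proof -
  have r: "r \<in> {1..n}" using assms(2) unfolding unit_move_def by blast
  have "(comp P r has_real_derivative 1) (at x within S)"
    using unit_move_has_derivative[OF assms(2) r] by simp
  then have "(1::real) = (if r = r' then 1 else 0)"
    by (rule unit_move_derivative_eq[OF assms(1,3) r])
  then show ?thesis by (simp split: if_splits)
qed

lemma unit_move_near:
  assumes "open S" "unit_move n I P x S r"
  obtains e where "e > 0" "\<And>y. y \<in> S \<inter> ball x e \<Longrightarrow> y \<in> interior I"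
    "\<And>y j. y \<in> S \<inter> ball x e \<Longrightarrow> j \<in> {1..n} \<Longrightarrow>
       (comp P j has_real_derivative (if j = r then 1 else 0)) (at y)"
    "\<And>y j. y \<in> S \<inter> ball x e \<Longrightarrow> j \<in> {1..n} \<Longrightarrow> \<bar>P y j - P x j\<bar> \<le> \<bar>y - x\<bar>"
proof -
  obtain e where "r \<in> {1..n}" and e: "e > 0" and sub: "S \<inter> ball x e \<subseteq> I"
    and aff: "\<And>y j. y \<in> S \<inter> ball x e \<Longrightarrow> j \<in> {1..n} \<Longrightarrow> P y j = P x j + (if j = r then y - x else 0)"
    using unit_moveD[OF assms(2)] by blast
  have op: "open (S \<inter> ball x e)" using assms(1) by blast
  show ?thesis
  proof (rule that[OF e])
    show "y \<in> interior I" if "y \<in> S \<inter> ball x e" for y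
      using interior_maximal[OF sub op] that by blast
    show "(comp P j has_real_derivative (if j = r then 1 else 0)) (at y)"
      if y: "y \<in> S \<inter> ball x e" and j: "j \<in> {1..n}" for y j
    proof (rule has_field_derivative_transform_within_open[OF _ op y])
      show "((\<lambda>z. P x j + (z - x) * (if j = r then 1 else 0)) has_real_derivative (if j = r then 1 else 0)) (at y)"
        by (auto intro!: derivative_eq_intros)
    qed (use aff j in \<open>simp add: comp_def\<close>)
    show "\<bar>P y j - P x j\<bar> \<le> \<bar>y - x\<bar>" if "y \<in> S \<inter> ball x e" "j \<in> {1..n}" for y j
      using aff[OF that] by simp
  qed
qed

lemma unit_move_side:
  assumes "open S" and "I \<inter> S \<noteq> {} \<Longrightarrow> \<exists>r. unit_move n I P x S r"
  shows "\<exists>e>0. \<forall>y\<in>I \<inter> S \<inter> ball x e. y \<in> interior I \<and> (\<forall>j\<in>{1..n}. \<bar>P y j - P x j\<bar> \<le> \<bar>y - x\<bar>) \<and>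
     (\<exists>r. unit_move n I P x S r \<and> (\<forall>j\<in>{1..n}. (comp P j has_real_derivative (if j = r then 1 else 0)) (at y)))"
proof (cases "I \<inter> S = {}")
  case True
  then show ?thesis by (intro exI[of _ "1::real"]) auto
next
  case False
  then obtain r where r: "unit_move n I P x S r" using assms(2) by blast
  obtain e where e: "e > 0" and "\<And>y. y \<in> S \<inter> ball x e \<Longrightarrow> y \<in> interior I"
    "\<And>y j. y \<in> S \<inter> ball x e \<Longrightarrow> j \<in> {1..n} \<Longrightarrow>
       (comp P j has_real_derivative (if j = r then 1 else 0)) (at y)"
    "\<And>y j. y \<in> S \<inter> ball x e \<Longrightarrow> j \<in> {1..n} \<Longrightarrow> \<bar>P y j - P x j\<bar> \<le> \<bar>y - x\<bar>"
    using unit_move_near[OF assms(1) r] by blast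
  then show ?thesis using r by (intro exI[of _ e] conjI e ballI exI[of _ r]) auto
qed

lemma unit_moves_at_differentiable:
  assumes "unit_move n I P x {..<x} rL" "unit_move n I P x {x<..} rR"
    and "\<forall>j\<in>{1..n}. comp P j differentiable (at x)"
  shows "rL = rR \<and> (\<forall>j\<in>{1..n}. deriv (comp P j) x = (if j = rL then 1 else 0))"
proof -
  have both: "deriv (comp P j) x = (if j = rL then 1 else 0) \<and> deriv (comp P j) x = (if j = rR then 1 else 0)"
    if j: "j \<in> {1..n}" for j
  proof -
    have D: "(comp P j has_real_derivative deriv (comp P j) x) (at x within S)" for S
      using assms(3) j DERIV_deriv_iff_real_differentiable has_field_derivative_at_within by blast
    show ?thesis
      using unit_move_derivative_eq[OF _ assms(1) j D] unit_move_derivative_eq[OF _ assms(2) j D] by simp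
  qed
  have "rL \<in> {1..n}" using assms(1) unfolding unit_move_def by blast
  from both[OF this] have "rL = rR" by (simp split: if_splits)
  with both show ?thesis by blast
qed

lemma affine_if_derivative_constant:
  fixes f :: "real \<Rightarrow> real"
  assumes "is_interval H" "\<And>t. t \<in> H \<Longrightarrow> (f has_real_derivative c) (at t)" "x \<in> H" "y \<in> H"
  shows "f y - f x = c * (y - x)"
proof -
  have "\<exists>k. \<forall>t\<in>H. f t - c * t = k"
  proof (rule has_field_derivative_zero_constant)
    show "convex H" using assms(1) is_interval_convex by blast
    fix t assume "t \<in> H"
    then have "((\<lambda>t. f t - c * t) has_real_derivative c - c * 1) (at t)"
      using assms(2) by (auto intro!: derivative_eq_intros)
    then show "((\<lambda>t. f t - c * t) has_real_derivative 0) (at t within H)"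
      using has_field_derivative_at_within by fastforce
  qed
  then obtain k where "\<forall>t\<in>H. f t - c * t = k" by blast
  then have "f y - c * y = f x - c * x" using assms(3,4) by simp
  then show ?thesis by (simp add: algebra_simps)
qed

lemma unit_move_transfer:
  assumes "unit_move n J Q x S r" "J \<subseteq> I" "x \<in> J" "\<And>y j. y \<in> J \<Longrightarrow> j \<in> {1..n} \<Longrightarrow> P y j = Q y j"
  shows "unit_move n I P x S r"
proof -
  obtain e where "r \<in> {1..n}" "e > 0" "S \<inter> ball x e \<subseteq> J"
    and aff: "\<And>y j. y \<in> S \<inter> ball x e \<Longrightarrow> j \<in> {1..n} \<Longrightarrow> Q y j = Q x j + (if j = r then y - x else 0)"
    using unit_moveD[OF assms(1)] by blast
  with assms(2-4) show ?thesis unfolding unit_move_def by (intro conjI exI[of _ e]) auto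
qed

lemma interior_two_sided:
  fixes x :: real
  assumes "x \<in> interior I"
  shows "\<exists>y\<in>I. y < x" "\<exists>z\<in>I. x < z"
proof -
  obtain e where "e > 0" "ball x e \<subseteq> I" using assms mem_interior by blast
  then have "x - e/2 \<in> I" "x + e/2 \<in> I" by (auto simp: dist_real_def)
  moreover have "x - e/2 < x" "x < x + e/2" using \<open>e > 0\<close> by simp_all
  ultimately show "\<exists>y\<in>I. y < x" "\<exists>z\<in>I. x < z" by blast+
qed

section \<open>Unit moves on both sides yield an n-system\<close>

locale unit_moves =
  fixes n :: nat and I :: "real set" and P :: "real \<Rightarrow> nat \<Rightarrow> real"
  assumes moves_left: "\<And>x y. x \<in> I \<Longrightarrow> y \<in> I \<Longrightarrow> y < x \<Longrightarrow> \<exists>r. unit_move n I P x {..<x} r"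
    and moves_right: "\<And>x y. x \<in> I \<Longrightarrow> y \<in> I \<Longrightarrow> x < y \<Longrightarrow> \<exists>r. unit_move n I P x {x<..} r"
begin

lemma local_structure:
  assumes "x \<in> I"
  obtains e where "e > 0"
    "\<And>y. y \<in> I \<inter> ball x e \<Longrightarrow> y \<noteq> x \<Longrightarrow> y \<in> interior I \<and> (\<forall>j\<in>{1..n}. \<bar>P y j - P x j\<bar> \<le> \<bar>y - x\<bar>) \<and>
       (\<exists>r. (y < x \<longrightarrow> unit_move n I P x {..<x} r) \<and> (x < y \<longrightarrow> unit_move n I P x {x<..} r) \<and>
            (\<forall>j\<in>{1..n}. (comp P j has_real_derivative (if j = r then 1 else 0)) (at y)))"
proof -
  obtain e1 where e1: "e1 > 0" and left: "\<forall>y\<in>I \<inter> {..<x} \<inter> ball x e1. y \<in> interior I \<and>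
       (\<forall>j\<in>{1..n}. \<bar>P y j - P x j\<bar> \<le> \<bar>y - x\<bar>) \<and> (\<exists>r. unit_move n I P x {..<x} r \<and>
       (\<forall>j\<in>{1..n}. (comp P j has_real_derivative (if j = r then 1 else 0)) (at y)))"
    using unit_move_side[of "{..<x}" I n P x, OF open_lessThan] moves_left[OF assms] by blast
  obtain e2 where e2: "e2 > 0" and right: "\<forall>y\<in>I \<inter> {x<..} \<inter> ball x e2. y \<in> interior I \<and>
       (\<forall>j\<in>{1..n}. \<bar>P y j - P x j\<bar> \<le> \<bar>y - x\<bar>) \<and> (\<exists>r. unit_move n I P x {x<..} r \<and>
       (\<forall>j\<in>{1..n}. (comp P j has_real_derivative (if j = r then 1 else 0)) (at y)))"
    using unit_move_side[of "{x<..}" I n P x, OF open_greaterThan] moves_right[OF assms] by blast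
  show ?thesis
  proof (rule that[of "min e1 e2"])
    fix y assume y: "y \<in> I \<inter> ball x (min e1 e2)" "y \<noteq> x"
    show "y \<in> interior I \<and> (\<forall>j\<in>{1..n}. \<bar>P y j - P x j\<bar> \<le> \<bar>y - x\<bar>) \<and>
       (\<exists>r. (y < x \<longrightarrow> unit_move n I P x {..<x} r) \<and> (x < y \<longrightarrow> unit_move n I P x {x<..} r) \<and>
            (\<forall>j\<in>{1..n}. (comp P j has_real_derivative (if j = r then 1 else 0)) (at y)))"
    proof (cases "y < x")
      case True
      then have "y \<in> I \<inter> {..<x} \<inter> ball x e1" using y by auto
      with left obtain r where "unit_move n I P x {..<x} r"
        "\<forall>j\<in>{1..n}. (comp P j has_real_derivative (if j = r then 1 else 0)) (at y)"
        and "y \<in> interior I" "\<forall>j\<in>{1..n}. \<bar>P y j - P x j\<bar> \<le> \<bar>y - x\<bar>" by blast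
      with True show ?thesis by (intro conjI exI[of _ r]) auto
    next
      case False
      then have "y \<in> I \<inter> {x<..} \<inter> ball x e2" using y by auto
      with right obtain r where "unit_move n I P x {x<..} r"
        "\<forall>j\<in>{1..n}. (comp P j has_real_derivative (if j = r then 1 else 0)) (at y)"
        and "y \<in> interior I" "\<forall>j\<in>{1..n}. \<bar>P y j - P x j\<bar> \<le> \<bar>y - x\<bar>" by blast
      with False show ?thesis by (intro conjI exI[of _ r]) auto
    qed
  qed (use e1 e2 in simp)
qed

lemma continuous_coordinate:
  assumes "j \<in> {1..n}"
  shows "continuous_on I (comp P j)"
  unfolding continuous_on_iff
proof (intro ballI allI impI)
  fix x and \<epsilon> :: real assume x: "x \<in> I" and "\<epsilon> > 0"
  obtain e where "e > 0" and near_x: "\<And>y. y \<in> I \<inter> ball x e \<Longrightarrow> y \<noteq> x \<Longrightarrow> \<bar>P y j - P x j\<bar> \<le> \<bar>y - x\<bar>"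
    using local_structure[OF x] assms by metis
  show "\<exists>d>0. \<forall>y\<in>I. dist y x < d \<longrightarrow> dist (comp P j y) (comp P j x) < \<epsilon>"
  proof (intro exI[of _ "min e \<epsilon>"] conjI ballI impI)
    fix y assume y: "y \<in> I" "dist y x < min e \<epsilon>"
    then have "\<bar>P y j - P x j\<bar> \<le> \<bar>y - x\<bar>"
      using near_x[of y] by (cases "y = x") (auto simp: dist_commute)
    with y show "dist (comp P j y) (comp P j x) < \<epsilon>"
      by (simp add: comp_def dist_real_def)
  qed (use \<open>e > 0\<close> \<open>\<epsilon> > 0\<close> in simp)
qed

lemma discrete_nondiff_set: "discrete_in (nondiff_set n I P) I"
  unfolding discrete_in_def
proof
  fix x assume x: "x \<in> I"
  obtain e where "e > 0" and near_x: "\<And>y. y \<in> I \<inter> ball x e \<Longrightarrow> y \<noteq> x \<Longrightarrow> y \<in> interior I \<and>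
       (\<exists>r. \<forall>j\<in>{1..n}. (comp P j has_real_derivative (if j = r then 1 else 0)) (at y))"
    using local_structure[OF x] by metis
  have "nondiff_set n I P \<inter> ball x e \<subseteq> {x}"
  proof
    fix y assume y: "y \<in> nondiff_set n I P \<inter> ball x e"
    show "y \<in> {x}"
    proof (rule ccontr)
      assume "y \<notin> {x}"
      with y near_x[of y] have "y \<in> interior I" and "\<forall>j\<in>{1..n}. comp P j differentiable (at y)"
        by (auto simp: nondiff_set_def real_differentiable_def)
      with y show False by (simp add: nondiff_set_def frontier_def)
    qed
  qed
  then show "\<exists>e>0. finite (nondiff_set n I P \<inter> ball x e)"
    using \<open>e > 0\<close> finite_subset by blast
qed

lemma interior_unit_moves:
  assumes "x \<in> interior I"
  obtains rL rR where "unit_move n I P x {..<x} rL" "unit_move n I P x {x<..} rR"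
proof -
  obtain y z where "y \<in> I" "y < x" "z \<in> I" "x < z" using interior_two_sided[OF assms] by blast
  moreover have "x \<in> I" using assms interior_subset by blast
  ultimately show ?thesis using moves_left moves_right that by metis
qed

lemma deriv_locally_constant:
  assumes q: "q \<in> I - nondiff_set n I P"
  shows "\<exists>e>0. \<forall>x\<in>ball q e \<inter> I. \<forall>j\<in>{1..n}. deriv (comp P j) x = deriv (comp P j) q"
proof -
  have qi: "q \<in> interior I" and qd: "\<forall>j\<in>{1..n}. comp P j differentiable (at q)"
    using q closure_subset by (auto simp: nondiff_set_def frontier_def)
  obtain rL rR where rL: "unit_move n I P q {..<q} rL" and rR: "unit_move n I P q {q<..} rR"
    using interior_unit_moves[OF qi] .
  have rR_eq: "rR = rL" and dq: "\<forall>j\<in>{1..n}. deriv (comp P j) q = (if j = rL then 1 else 0)"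
    using unit_moves_at_differentiable[OF rL rR qd] by auto
  obtain e where "e > 0" and near_q: "\<And>x. x \<in> I \<inter> ball q e \<Longrightarrow> x \<noteq> q \<Longrightarrow>
       (\<exists>r. (x < q \<longrightarrow> unit_move n I P q {..<q} r) \<and> (q < x \<longrightarrow> unit_move n I P q {q<..} r) \<and>
            (\<forall>j\<in>{1..n}. (comp P j has_real_derivative (if j = r then 1 else 0)) (at x)))"
    using local_structure[of q] q by (metis Diff_iff)
  have "deriv (comp P j) x = deriv (comp P j) q" if x: "x \<in> ball q e \<inter> I" and j: "j \<in> {1..n}" for x j
  proof (cases "x = q")
    case False
    then obtain r where r: "x < q \<longrightarrow> unit_move n I P q {..<q} r" "q < x \<longrightarrow> unit_move n I P q {q<..} r"
      and dx: "\<forall>j\<in>{1..n}. (comp P j has_real_derivative (if j = r then 1 else 0)) (at x)"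
      using near_q[of x] x by blast
    have "r = rL"
      using False r unit_move_unique[OF _ rL] unit_move_unique[OF _ rR] rR_eq
      by (metis linorder_neqE_linordered_idom trivial_limit_at_left_real trivial_limit_at_right_real)
    then show ?thesis using dx dq j DERIV_imp_deriv by metis
  qed simp
  then show ?thesis using \<open>e > 0\<close> by blast
qed

lemma deriv_constant_on_diff_subinterval:
  assumes H: "diff_subinterval n I P H" and "s \<in> H" "t \<in> H" "j \<in> {1..n}"
  shows "deriv (comp P j) s = deriv (comp P j) t"
proof (rule connected_local_const[OF _ assms(2,3)])
  have "is_interval H" "H \<subseteq> interior I" "\<forall>q\<in>H. \<forall>j\<in>{1..n}. comp P j differentiable (at q)"
    using H interior_maximal unfolding diff_subinterval_def by auto
  then have Hnd: "H \<subseteq> I - nondiff_set n I P"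
    using interior_subset[of I] by (auto simp: nondiff_set_def frontier_def)
  show "connected H" using \<open>is_interval H\<close> is_interval_connected by blast
  show "\<forall>a\<in>H. eventually (\<lambda>b. deriv (comp P j) a = deriv (comp P j) b) (at a within H)"
  proof
    fix a assume a: "a \<in> H"
    obtain e where "e > 0" and "\<forall>x\<in>ball a e \<inter> I. \<forall>j\<in>{1..n}. deriv (comp P j) x = deriv (comp P j) a"
      using deriv_locally_constant Hnd a by blast
    then show "eventually (\<lambda>b. deriv (comp P j) a = deriv (comp P j) b) (at a within H)"
      unfolding eventually_at using Hnd assms(4) by (force simp: dist_commute)
  qed
qed

lemma unit_slope_on_diff_subinterval:
  assumes H: "diff_subinterval n I P H"
  shows "\<exists>r\<in>{1..n}. (\<forall>x\<in>H. \<forall>y\<in>H. P y r - P x r = y - x) \<and>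
                    (\<forall>j\<in>{1..n}. j \<noteq> r \<longrightarrow> (\<forall>x\<in>H. \<forall>y\<in>H. P y j = P x j))"
proof -
  have iH: "is_interval H" and neH: "H \<noteq> {}" and Hint: "H \<subseteq> interior I"
    and dH: "\<forall>q\<in>H. \<forall>j\<in>{1..n}. comp P j differentiable (at q)"
    using H interior_maximal unfolding diff_subinterval_def by auto
  obtain q0 where q0: "q0 \<in> H" using neH by blast
  obtain rL rR where "unit_move n I P q0 {..<q0} rL" "unit_move n I P q0 {q0<..} rR"
    using interior_unit_moves q0 Hint by blast
  then have r: "rL \<in> {1..n}" and dq0: "\<forall>j\<in>{1..n}. deriv (comp P j) q0 = (if j = rL then 1 else 0)"
    using unit_moves_at_differentiable dH q0 unfolding unit_move_def by blast+
  have slope: "P y j - P x j = (if j = rL then 1 else 0) * (y - x)"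
    if j: "j \<in> {1..n}" and xy: "x \<in> H" "y \<in> H" for j x y
  proof -
    have "(comp P j has_real_derivative (if j = rL then 1 else 0)) (at t)" if "t \<in> H" for t
      using deriv_constant_on_diff_subinterval[OF H that q0 j] that dq0 dH j
        DERIV_deriv_iff_real_differentiable by metis
    from affine_if_derivative_constant[OF iH this xy] show ?thesis by (simp add: comp_def)
  qed
  show ?thesis
  proof (intro bexI[of _ rL] conjI ballI impI r)
    fix x y assume "x \<in> H" "y \<in> H"
    then show "P y rL - P x rL = y - x" using slope[OF r] by simp
  next
    fix j x y assume "j \<in> {1..n}" "j \<noteq> rL" "x \<in> H" "y \<in> H"
    then show "P y j = P x j" using slope[of j x y] by simp
  qed
qed

lemma n_system:
  assumes "ordered_sum n I P"
    and junction: "\<And>x r s. x \<in> interior I \<Longrightarrow> unit_move n I P x {..<x} r \<Longrightarrow>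
       unit_move n I P x {x<..} s \<Longrightarrow> r < s \<Longrightarrow> \<forall>j\<in>{r..s}. P x j = P x r"
  shows "n_system n I P"
  unfolding n_system_def cont_pw_linear_def
proof (intro conjI allI impI ballI assms(1) unit_slope_on_diff_subinterval continuous_coordinate
    discrete_nondiff_set)
  fix q assume "q \<in> I - nondiff_set n I P"
  then show "\<exists>e>0. \<forall>x\<in>ball q e \<inter> I. x \<notin> nondiff_set n I P \<longrightarrow>
      (\<forall>j\<in>{1..n}. deriv (comp P j) x = deriv (comp P j) q)"
    using deriv_locally_constant by blast
next
  fix q r s j
  assume q: "q \<in> interior I" and rs: "r \<in> {1..n}" "s \<in> {1..n}" "r < s" and j: "j \<in> {r..s}"
    and "(comp P r has_real_derivative 1) (at_left q)" "(comp P s has_real_derivative 1) (at_right q)"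
  moreover obtain rL rR where "unit_move n I P q {..<q} rL" "unit_move n I P q {q<..} rR"
    using interior_unit_moves[OF q] .
  ultimately have "r = rL" "s = rR"
    using unit_move_derivative_eq[of q "{..<q}"] unit_move_derivative_eq[of q "{q<..}"]
    by (metis one_neq_zero trivial_limit_at_left_real trivial_limit_at_right_real)+
  then show "P q j = P q r"
    using junction q \<open>unit_move n I P q {..<q} rL\<close> \<open>unit_move n I P q {q<..} rR\<close> rs j by blast
qed

end

section \<open>Staircase interpolation\<close>

definition tail_increment :: "nat \<Rightarrow> (nat \<Rightarrow> real) \<Rightarrow> (nat \<Rightarrow> real) \<Rightarrow> nat \<Rightarrow> real" where
  "tail_increment n A B j = (\<Sum>i=j..n. B i - A i)"

text \<open>Coordinate j moves from A j to B j during the time interval from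
  a + tail_increment n A B (Suc j) to a + tail_increment n A B j, so the coordinates move one
  at a time with slope 1, the n-th first.\<close>
definition staircase :: "nat \<Rightarrow> real \<Rightarrow> (nat \<Rightarrow> real) \<Rightarrow> (nat \<Rightarrow> real) \<Rightarrow> real \<Rightarrow> nat \<Rightarrow> real" where
  "staircase n a A B t j = A j + min (B j - A j) (max 0 (t - a - tail_increment n A B (Suc j)))"

lemma min_max_split:
  fixes d T \<tau> :: real
  assumes "0 \<le> d" "0 \<le> T"
  shows "min d (max 0 (\<tau> - T)) + min T (max 0 \<tau>) = min (d + T) (max 0 \<tau>)"
  using assms by (auto simp: min_def max_def)

locale stair_gap =
  fixes n :: nat and a b :: real and A B :: "nat \<Rightarrow> real"
  assumes increasing: "\<And>j. j \<in> {1..n} \<Longrightarrow> A j \<le> B j"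
    and total_increment: "(\<Sum>j=1..n. B j) - (\<Sum>j=1..n. A j) = b - a"
begin

abbreviation "T \<equiv> tail_increment n A B"
abbreviation "S \<equiv> staircase n a A B"

lemma tail_antimono: "1 \<le> j \<Longrightarrow> j \<le> k \<Longrightarrow> T k \<le> T j"
  unfolding tail_increment_def by (rule sum_mono2) (use increasing in auto)

lemma tail_nonneg: "1 \<le> j \<Longrightarrow> 0 \<le> T j"
  unfolding tail_increment_def by (rule sum_nonneg) (use increasing in auto)

lemma tail_beyond: "T (Suc n) = 0"
  by (simp add: tail_increment_def)

lemma tail_step: "j \<le> n \<Longrightarrow> T j = (B j - A j) + T (Suc j)"
  unfolding tail_increment_def by (simp add: sum.atLeast_Suc_atMost)

lemma tail_1: "T 1 = b - a"
  using total_increment by (simp add: tail_increment_def sum_subtractf)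

lemma tail_le_length: "1 \<le> j \<Longrightarrow> T j \<le> b - a"
  using tail_antimono[of 1 j] tail_1 by simp

lemma dimension_pos: "a < b \<Longrightarrow> 1 \<le> n"
proof (rule ccontr)
  assume "a < b" "\<not> 1 \<le> n"
  then have "n = 0" by simp
  with \<open>a < b\<close> tail_1 show False by (simp add: tail_increment_def)
qed

lemma sum_of_clamps:
  "1 \<le> m \<Longrightarrow> m \<le> Suc n \<Longrightarrow>
    (\<Sum>j=m..n. min (B j - A j) (max 0 (\<tau> - T (Suc j)))) = min (T m) (max 0 \<tau>)"
proof (induction "Suc n - m" arbitrary: m)
  case 0
  then have "m = Suc n" by simp
  then show ?case by (simp add: tail_beyond)
next
  case (Suc k)
  then have mn: "m \<le> n" by simp
  have "(\<Sum>j=m..n. min (B j - A j) (max 0 (\<tau> - T (Suc j)))) =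
     min (B m - A m) (max 0 (\<tau> - T (Suc m))) + (\<Sum>j=Suc m..n. min (B j - A j) (max 0 (\<tau> - T (Suc j))))"
    using mn by (simp add: sum.atLeast_Suc_atMost)
  also have "\<dots> = min (B m - A m + T (Suc m)) (max 0 \<tau>)"
    using Suc by (simp add: min_max_split increasing tail_nonneg)
  also have "\<dots> = min (T m) (max 0 \<tau>)" using tail_step[OF mn] by simp
  finally show ?case .
qed

lemma staircase_start: "j \<in> {1..n} \<Longrightarrow> S a j = A j"
  using increasing tail_nonneg[of "Suc j"] by (simp add: staircase_def)

lemma staircase_end: "j \<in> {1..n} \<Longrightarrow> S b j = B j"
  using increasing tail_step[of j] tail_le_length[of j] tail_nonneg[of "Suc j"]
  by (simp add: staircase_def)

lemma staircase_bounds: "j \<in> {1..n} \<Longrightarrow> A j \<le> S t j \<and> S t j \<le> B j"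
  using increasing by (simp add: staircase_def)

lemma staircase_sum: "a \<le> t \<Longrightarrow> t \<le> b \<Longrightarrow> (\<Sum>j=1..n. S t j) = (\<Sum>j=1..n. A j) + (t - a)"
proof -
  assume t: "a \<le> t" "t \<le> b"
  have "(\<Sum>j=1..n. S t j) = (\<Sum>j=1..n. A j) + (\<Sum>j=1..n. min (B j - A j) (max 0 (t - a - T (Suc j))))"
    by (simp add: staircase_def sum.distrib)
  also have "(\<Sum>j=1..n. min (B j - A j) (max 0 (t - a - T (Suc j)))) = min (T 1) (max 0 (t - a))"
    by (rule sum_of_clamps) auto
  finally show ?thesis using tail_1 t by simp
qed

text \<open>A coordinate only leaves A j once all higher coordinates have reached their targets.\<close>
lemma staircase_sorted:
  assumes "j \<in> {1..<n}" "A j \<le> A (Suc j)" "B j \<le> B (Suc j)"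
  shows "S t j \<le> S t (Suc j)"
proof (cases "T (Suc j) \<le> t - a")
  case True
  have "T (Suc j) = (B (Suc j) - A (Suc j)) + T (Suc (Suc j))" using assms(1) tail_step by simp
  then have "S t (Suc j) = B (Suc j)" using True increasing[of "Suc j"] assms(1) by (simp add: staircase_def)
  then show ?thesis using staircase_bounds[of j t] assms(1,3) by fastforce
next
  case False
  then have "S t j = A j" using increasing[of j] assms(1) by (simp add: staircase_def)
  then show ?thesis using staircase_bounds[of "Suc j" t] assms(1,2) by fastforce
qed

lemma right_mover_exists:
  assumes x: "a \<le> x" "x < b"
  obtains r where "r \<in> {1..n}" "T (Suc r) \<le> x - a" "x - a < T r"
proof -
  define R where "R = {j\<in>{1..n}. x - a < T j}"
  have "1 \<le> n" using dimension_pos x by simp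
  then have "1 \<in> R" using tail_1 x by (simp add: R_def)
  define r where "r = Max R"
  have "finite R" by (simp add: R_def)
  then have "r \<in> R" unfolding r_def using Max_in \<open>1 \<in> R\<close> by blast
  then have r: "r \<in> {1..n}" "x - a < T r" by (simp_all add: R_def)
  have "T (Suc r) \<le> x - a"
  proof (cases "r = n")
    case True then show ?thesis using tail_beyond x by simp
  next
    case False
    have "Suc r \<notin> R"
    proof
      assume "Suc r \<in> R"
      then have "Suc r \<le> r" unfolding r_def using Max_ge[OF \<open>finite R\<close>] by blast
      then show False by simp
    qed
    with False r show ?thesis by (auto simp: R_def)
  qed
  with r show ?thesis using that by blast
qed

lemma left_mover_exists:
  assumes x: "a < x" "x \<le> b"
  obtains r where "r \<in> {1..n}" "T (Suc r) < x - a" "x - a \<le> T r"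
proof -
  define R where "R = {j\<in>{1..n}. T (Suc j) < x - a}"
  have "1 \<le> n" using dimension_pos x by simp
  then have "n \<in> R" using tail_beyond x by (simp add: R_def)
  define r where "r = Min R"
  have "finite R" by (simp add: R_def)
  then have "r \<in> R" unfolding r_def using Min_in \<open>n \<in> R\<close> by blast
  then have r: "r \<in> {1..n}" "T (Suc r) < x - a" by (simp_all add: R_def)
  have "x - a \<le> T r"
  proof (cases "r = 1")
    case True then show ?thesis using tail_1 x by simp
  next
    case False
    have "r - 1 \<notin> R"
    proof
      assume "r - 1 \<in> R"
      then have "r \<le> r - 1" unfolding r_def using Min_le[OF \<open>finite R\<close>] by blast
      then show False using r(1) False by arith
    qed
    with False r show ?thesis by (auto simp: R_def)
  qed
  with r show ?thesis using that by blast
qed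

lemma staircase_step:
  assumes r: "r \<in> {1..n}" and "a + T (Suc r) \<le> x" "x \<le> y" "y \<le> a + T r" and j: "j \<in> {1..n}"
  shows "S y j = S x j + (if j = r then y - x else 0)"
proof -
  consider "j = r" | "r < j" | "j < r" by linarith
  then show ?thesis
  proof cases
    case 1
    then show ?thesis using assms tail_step[of r] by (simp add: staircase_def min_def max_def)
  next
    case 2
    then have "T j \<le> T (Suc r)" using tail_antimono[of "Suc r" j] by simp
    then show ?thesis using 2 assms tail_step[of j] by (simp add: staircase_def min_def max_def)
  next
    case 3
    then have "T r \<le> T (Suc j)" using tail_antimono[of "Suc j" r] by simp
    then show ?thesis using 3 assms by (simp add: staircase_def min_def max_def)
  qed
qed

lemma staircase_moves_right:
  assumes x: "a \<le> x" "x < b"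
  obtains r where "unit_move n {a..b} S x {x<..} r" "T (Suc r) \<le> x - a" "x - a < T r"
proof -
  obtain r where r: "r \<in> {1..n}" "T (Suc r) \<le> x - a" "x - a < T r"
    using right_mover_exists[OF x] by blast
  have "unit_move n {a..b} S x {x<..} r"
    unfolding unit_move_def
  proof (intro conjI r(1) exI[of _ "a + T r - x"] ballI)
    show "0 < a + T r - x" using r by simp
    fix y assume "y \<in> {x<..} \<inter> ball x (a + T r - x)"
    then have y: "x \<le> y" "y < a + T r" by (auto simp: dist_real_def)
    then show "y \<in> {a..b}" using x tail_le_length[of r] r by auto
    show "S y j = S x j + (if j = r then y - x else 0)" if "j \<in> {1..n}" for j
      using staircase_step[OF r(1) _ y(1) _ that] r y by simp
  qed
  then show ?thesis using that r by blast
qed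

lemma staircase_moves_left:
  assumes x: "a < x" "x \<le> b"
  obtains r where "unit_move n {a..b} S x {..<x} r" "T (Suc r) < x - a" "x - a \<le> T r"
proof -
  obtain r where r: "r \<in> {1..n}" "T (Suc r) < x - a" "x - a \<le> T r"
    using left_mover_exists[OF x] by blast
  have "unit_move n {a..b} S x {..<x} r"
    unfolding unit_move_def
  proof (intro conjI r(1) exI[of _ "x - a - T (Suc r)"] ballI)
    show "0 < x - a - T (Suc r)" using r by simp
    fix y assume "y \<in> {..<x} \<inter> ball x (x - a - T (Suc r))"
    then have y: "a + T (Suc r) < y" "y \<le> x" by (auto simp: dist_real_def)
    then show "y \<in> {a..b}" using x tail_nonneg[of "Suc r"] by auto
    have "S x j = S y j + (if j = r then x - y else 0)" if "j \<in> {1..n}" for j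
      using staircase_step[OF r(1) _ y(2) _ that] r y by simp
    then show "S y j = S x j + (if j = r then y - x else 0)" if "j \<in> {1..n}" for j
      using that by simp
  qed
  then show ?thesis using that r by blast
qed

lemma right_mover_at_start:
  assumes "r \<in> {1..n}" "T (Suc r) \<le> 0" "0 < T r"
  shows "A r < B r" "\<And>j. j \<in> {r<..n} \<Longrightarrow> A j = B j"
proof -
  show "A r < B r" using assms tail_step[of r] by simp
  fix j assume j: "j \<in> {r<..n}"
  then have "B j - A j \<le> T (Suc r)"
    using tail_step[of j] tail_nonneg[of "Suc j"] tail_antimono[of "Suc r" j] by simp
  then show "A j = B j" using assms(2) increasing[of j] j by simp
qed

lemma left_mover_at_end:
  assumes "r \<in> {1..n}" "T (Suc r) < b - a" "b - a \<le> T r"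
  shows "A r < B r" "\<And>j. j \<in> {1..<r} \<Longrightarrow> A j = B j"
proof -
  show "A r < B r" using assms tail_step[of r] by simp
  fix j assume j: "j \<in> {1..<r}"
  then have "B j - A j + T r \<le> T j"
    using tail_step[of j] tail_antimono[of "Suc j" r] assms(1) by simp
  then show "A j = B j" using assms(3) tail_le_length[of j] increasing[of j] j assms(1) by simp
qed

end

section \<open>Discrete sets and marks at the ends of an interval\<close>

lemma discrete_in_Un: "discrete_in A I \<Longrightarrow> discrete_in B I \<Longrightarrow> discrete_in (A \<union> B) I"
  unfolding discrete_in_def
proof
  fix x assume "\<forall>x\<in>I. \<exists>e>0. finite (A \<inter> ball x e)" "\<forall>x\<in>I. \<exists>e>0. finite (B \<inter> ball x e)" "x \<in> I"
  then obtain e1 e2 where "e1 > 0" "finite (A \<inter> ball x e1)" "e2 > 0" "finite (B \<inter> ball x e2)"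
    by blast
  moreover have "(A \<union> B) \<inter> ball x (min e1 e2) \<subseteq> (A \<inter> ball x e1) \<union> (B \<inter> ball x e2)" by auto
  ultimately show "\<exists>e>0. finite ((A \<union> B) \<inter> ball x e)"
    by (intro exI[of _ "min e1 e2"]) (auto intro: finite_subset)
qed

lemma discrete_in_subset: "discrete_in A I \<Longrightarrow> B \<subseteq> A \<Longrightarrow> discrete_in B I"
  unfolding discrete_in_def by (meson finite_subset inf_mono order_refl)

lemma finite_inter_if_discrete_in:
  assumes "discrete_in E I" "{a..b} \<subseteq> I"
  shows "finite (E \<inter> {a..b})"
proof (rule ccontr)
  assume "infinite (E \<inter> {a..b})"
  then obtain x where x: "x \<in> {a..b}" "x islimpt (E \<inter> {a..b})"
    using Heine_Borel_imp_Bolzano_Weierstrass[OF compact_Icc] by blast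
  obtain e where "e > 0" "finite (E \<inter> ball x e)" using assms x unfolding discrete_in_def by blast
  moreover have "infinite (E \<inter> {a..b} \<inter> ball x e)" using x(2) \<open>e > 0\<close> islimpt_eq_infinite_ball by blast
  ultimately show False by (meson finite_subset inf_le1 inf_mono order_refl)
qed

lemma discrete_in_range:
  assumes "\<And>x. x \<in> I \<Longrightarrow> \<exists>e>0. eventually (\<lambda>m. f m \<notin> ball x e) sequentially"
  shows "discrete_in (range f) I"
  unfolding discrete_in_def
proof
  fix x assume "x \<in> I"
  then obtain e N where "e > 0" and N: "\<And>m. m \<ge> N \<Longrightarrow> f m \<notin> ball x e"
    using assms unfolding eventually_sequentially by blast
  have "range f \<inter> ball x e \<subseteq> f ` {..<N}"
  proof
    fix z assume "z \<in> range f \<inter> ball x e"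
    then obtain m where "z = f m" "f m \<in> ball x e" by blast
    then show "z \<in> f ` {..<N}" using N not_le by blast
  qed
  with \<open>e > 0\<close> show "\<exists>e>0. finite (range f \<inter> ball x e)" by (meson finite_imageI finite_lessThan finite_subset)
qed

lemma discrete_in_range_convergent:
  fixes f :: "nat \<Rightarrow> real"
  assumes "f \<longlonglongrightarrow> c" "c \<notin> I"
  shows "discrete_in (range f) I"
proof (rule discrete_in_range)
  fix x assume "x \<in> I"
  then have e: "dist x c / 2 > 0" using assms(2) by auto
  then have "eventually (\<lambda>m. dist (f m) c < dist x c / 2) sequentially"
    using assms(1) tendstoD by blast
  moreover have "f m \<notin> ball x (dist x c / 2)" if "dist (f m) c < dist x c / 2" for m
    using that dist_triangle[of x c "f m"] by (simp add: dist_commute)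
  ultimately have "eventually (\<lambda>m. f m \<notin> ball x (dist x c / 2)) sequentially"
    by (rule eventually_mono)
  with e show "\<exists>e>0. eventually (\<lambda>m. f m \<notin> ball x e) sequentially" by blast
qed

lemma discrete_in_range_of_nat: "discrete_in (range real) I"
proof (rule discrete_in_range)
  fix x :: real
  obtain N where N: "x + 1 \<le> real N" using real_arch_simple by blast
  have "real m \<notin> ball x 1" if "m \<ge> N" for m
    using N that by (auto simp: dist_real_def)
  then have "eventually (\<lambda>m. real m \<notin> ball x 1) sequentially"
    unfolding eventually_sequentially by blast
  then show "\<exists>e>0. eventually (\<lambda>m. real m \<notin> ball x e) sequentially" by (intro exI[of _ 1]) simp
qed

text \<open>Every point of an interval I must lie in a closed gap between two consecutive marks, so marks
  accumulate at each end of I that does not belong to I.\<close>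
definition left_end_marks :: "real set \<Rightarrow> real set" where
  "left_end_marks I = (if Inf I \<in> I then {} else I \<inter> range (\<lambda>m. Inf I + inverse (real (Suc m))))"

definition right_end_marks :: "real set \<Rightarrow> real set" where
  "right_end_marks I =
     (if \<not> bdd_above I then I \<inter> range real
      else if Sup I \<in> I then {} else I \<inter> range (\<lambda>m. Sup I + - inverse (real (Suc m))))"

lemma discrete_in_empty: "discrete_in {} I"
  unfolding discrete_in_def using zero_less_one by blast

lemma left_end_marks_discrete: "discrete_in (left_end_marks I) I"
  unfolding left_end_marks_def
  using discrete_in_subset[OF discrete_in_range_convergent[OF LIMSEQ_inverse_real_of_nat_add] Int_lower2]
  by (simp add: discrete_in_empty split: if_split)

lemma right_end_marks_discrete: "discrete_in (right_end_marks I) I"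
  unfolding right_end_marks_def
  using discrete_in_subset[OF discrete_in_range_convergent[OF LIMSEQ_inverse_real_of_nat_add_minus] Int_lower2]
    discrete_in_subset[OF discrete_in_range_of_nat Int_lower2]
  by (simp add: discrete_in_empty split: if_split)

lemma cInf_in_frontier:
  fixes I :: "real set"
  assumes "bdd_below I" "Inf I \<in> I"
  shows "Inf I \<in> frontier I"
proof -
  have "Inf I \<notin> interior I"
  proof
    assume "Inf I \<in> interior I"
    then obtain e where e: "e > 0" "ball (Inf I) e \<subseteq> I" using mem_interior by blast
    then have "Inf I - e/2 \<in> I" by (auto simp: dist_real_def)
    then have "Inf I \<le> Inf I - e/2" using cInf_lower assms(1) by blast
    then show False using e by simp
  qed
  then show ?thesis using assms closure_subset unfolding frontier_def by auto
qed

lemma cSup_in_frontier: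
  fixes I :: "real set"
  assumes "bdd_above I" "Sup I \<in> I"
  shows "Sup I \<in> frontier I"
proof -
  have "Sup I \<notin> interior I"
  proof
    assume "Sup I \<in> interior I"
    then obtain e where e: "e > 0" "ball (Sup I) e \<subseteq> I" using mem_interior by blast
    then have "Sup I + e/2 \<in> I" by (auto simp: dist_real_def)
    then have "Sup I + e/2 \<le> Sup I" using cSup_upper assms(1) by blast
    then show False using e by simp
  qed
  then show ?thesis using assms closure_subset unfolding frontier_def by auto
qed

lemma end_mark_below:
  assumes I: "is_interval I" "bdd_below I" and x: "x \<in> I" "y \<in> I" "y < x"
  shows "\<exists>e\<in>left_end_marks I \<union> (I \<inter> frontier I). e < x"
proof (cases "Inf I \<in> I")
  case True
  then have "Inf I \<in> I \<inter> frontier I" using cInf_in_frontier[OF I(2)] by blast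
  moreover have "Inf I < x" using cInf_lower[OF x(2) I(2)] x by simp
  ultimately show ?thesis by blast
next
  case False
  have "0 < x - Inf I" using cInf_lower[OF x(2) I(2)] x by simp
  then obtain m where m: "inverse (real (Suc m)) < x - Inf I" using reals_Archimedean by blast
  define s where "s = Inf I + inverse (real (Suc m))"
  have "s < x" using m by (simp add: s_def)
  have "Inf I < s" by (simp add: s_def)
  then obtain z where "z \<in> I" "z < s" using cInf_less_iff[OF _ I(2)] x by blast
  then have "s \<in> I" using mem_is_interval_1_I[OF I(1) \<open>z \<in> I\<close> x(1)] \<open>s < x\<close> by simp
  then have "s \<in> left_end_marks I" using False by (auto simp: left_end_marks_def s_def)
  with \<open>s < x\<close> show ?thesis by blast
qed

lemma end_mark_above:
  assumes I: "is_interval I" and x: "x \<in> I" "y \<in> I" "x < y"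
  shows "\<exists>e\<in>right_end_marks I \<union> (I \<inter> frontier I). x < e"
proof (cases "bdd_above I")
  case bdd: True
  show ?thesis
  proof (cases "Sup I \<in> I")
    case True
    then have "Sup I \<in> I \<inter> frontier I" using cSup_in_frontier[OF bdd] by blast
    moreover have "x < Sup I" using cSup_upper[OF x(2) bdd] x by simp
    ultimately show ?thesis by blast
  next
    case False
    have "0 < Sup I - x" using cSup_upper[OF x(2) bdd] x by simp
    then obtain m where m: "inverse (real (Suc m)) < Sup I - x" using reals_Archimedean by blast
    define s where "s = Sup I + - inverse (real (Suc m))"
    have "x < s" using m by (simp add: s_def)
    have "s < Sup I" by (simp add: s_def)
    then obtain z where "z \<in> I" "s < z" using less_cSup_iff[OF _ bdd] x by blast
    then have "s \<in> I" using mem_is_interval_1_I[OF I x(1) \<open>z \<in> I\<close>] \<open>x < s\<close> by simp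
    then have "s \<in> right_end_marks I" using False bdd by (auto simp: right_end_marks_def s_def)
    with \<open>x < s\<close> show ?thesis by blast
  qed
next
  case False
  obtain m where m: "x < real m" using reals_Archimedean2 by blast
  moreover obtain z where "z \<in> I" "real m < z" using False unfolding bdd_above_def by (meson not_le)
  ultimately have "real m \<in> I" using mem_is_interval_1_I[OF I x(1) \<open>z \<in> I\<close>] by simp
  then have "real m \<in> right_end_marks I" using False by (simp add: right_end_marks_def)
  with m show ?thesis by blast
qed

section \<open>The refined system\<close>

lemma affine_on_closed_interval:
  fixes f :: "real \<Rightarrow> real"
  assumes "continuous_on {a..b} f" "a < b" "\<And>t. t \<in> {a<..<b} \<Longrightarrow> f t = c + d * t" "t \<in> {a..b}"
  shows "f t = c + d * t"
proof -
  have "continuous_on (closure {a<..<b}) (\<lambda>t. f t - (c + d * t))"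
    using assms(1,2) by (auto intro!: continuous_intros)
  then have "f t - (c + d * t) = 0"
    by (rule continuous_constant_on_closure[where f = "\<lambda>t. f t - (c + d * t)"]) (use assms in auto)
  then show ?thesis by simp
qed

definition block_slope :: "nat \<Rightarrow> nat \<Rightarrow> nat \<Rightarrow> real" where
  "block_slope L U j = (if L \<le> j \<and> j \<le> U then 1 / real (U - L + 1) else 0)"

lemma block_slope_pos_iff: "0 < block_slope L U j \<longleftrightarrow> L \<le> j \<and> j \<le> U"
  by (simp add: block_slope_def)

lemma block_slope_nonneg: "0 \<le> block_slope L U j"
  by (simp add: block_slope_def)

lemma block_slope_inject:
  assumes "1 \<le> L1" "L1 \<le> U1" "U1 \<le> n" "1 \<le> L2" "L2 \<le> U2" "U2 \<le> n"
    and "\<And>j. j \<in> {1..n} \<Longrightarrow> block_slope L1 U1 j = block_slope L2 U2 j"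
  shows "L1 = L2 \<and> U1 = U2"
proof -
  have same_block: "L1 \<le> j \<and> j \<le> U1 \<longleftrightarrow> L2 \<le> j \<and> j \<le> U2" if "j \<in> {1..n}" for j
  proof -
    have "0 < block_slope L1 U1 j \<longleftrightarrow> 0 < block_slope L2 U2 j" using assms(7)[OF that] by simp
    then show ?thesis unfolding block_slope_pos_iff .
  qed
  have "L2 \<le> L1" "L1 \<le> L2" "U1 \<le> U2" "U2 \<le> U1"
    using same_block[of L1] same_block[of L2] same_block[of U1] same_block[of U2] assms(1-6) by auto
  then show ?thesis by simp
qed

locale refinement =
  fixes n :: nat and I D :: "real set" and Pt :: "real \<Rightarrow> nat \<Rightarrow> real"
  assumes interval: "is_interval I" and bdd: "bdd_below I"
    and gen: "gen_n_system n I Pt" and D_subset: "D \<subseteq> I" and D_discrete: "discrete_in D I"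
begin

definition marks :: "real set" where
  "marks = D \<union> nondiff_set n I Pt \<union> left_end_marks I \<union> right_end_marks I"

definition consecutive :: "real \<Rightarrow> real \<Rightarrow> bool" where
  "consecutive a b \<longleftrightarrow> a \<in> marks \<and> b \<in> marks \<and> a < b \<and> marks \<inter> {a<..<b} = {}"

lemma marks_subset: "marks \<subseteq> I"
  using D_subset by (auto simp: marks_def left_end_marks_def right_end_marks_def nondiff_set_def)

lemma nondiff_subset_marks: "nondiff_set n I Pt \<subseteq> marks"
  by (auto simp: marks_def)

lemma ordered_sum_Pt: "ordered_sum n I Pt"
  using gen unfolding gen_n_system_def by blast

lemma continuous_Pt: "j \<in> {1..n} \<Longrightarrow> continuous_on I (comp Pt j)"
proof -
  have "\<forall>j\<in>{1..n}. continuous_on I (comp Pt j)"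
    using gen unfolding gen_n_system_def cont_pw_linear_def by (elim conjE)
  then show "j \<in> {1..n} \<Longrightarrow> continuous_on I (comp Pt j)" by blast
qed

lemma gen_block_slopes:
  assumes "diff_subinterval n I Pt H"
  shows "\<exists>L U. 1 \<le> L \<and> L \<le> U \<and> U \<le> n \<and>
           (\<forall>j\<in>{L..U}. \<forall>x\<in>H. Pt x j = Pt x L) \<and>
           (\<forall>j\<in>{L..U}. \<forall>x\<in>H. \<forall>y\<in>H. Pt y j - Pt x j = (y - x) / real (U - L + 1)) \<and>
           (\<forall>j\<in>{1..n}. j \<notin> {L..U} \<longrightarrow> (\<forall>x\<in>H. \<forall>y\<in>H. Pt y j = Pt x j))"
proof -
  have "\<forall>H. diff_subinterval n I Pt H \<longrightarrow>
        (\<exists>L U. 1 \<le> L \<and> L \<le> U \<and> U \<le> n \<and>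
           (\<forall>j\<in>{L..U}. \<forall>x\<in>H. Pt x j = Pt x L) \<and>
           (\<forall>j\<in>{L..U}. \<forall>x\<in>H. \<forall>y\<in>H. Pt y j - Pt x j = (y - x) / real (U - L + 1)) \<and>
           (\<forall>j\<in>{1..n}. j \<notin> {L..U} \<longrightarrow> (\<forall>x\<in>H. \<forall>y\<in>H. Pt y j = Pt x j)))"
    using gen unfolding gen_n_system_def by (elim conjE)
  with assms show ?thesis by blast
qed

lemma gen_junction:
  assumes "x \<in> interior I" "x \<in> nondiff_set n I Pt" "1 \<le> L1" "L1 \<le> U1" "U1 \<le> n" "1 \<le> L2" "L2 \<le> U2" "U2 \<le> n"
    and "\<And>j. j \<in> {L1..U1} \<Longrightarrow> (comp Pt j has_real_derivative 1 / real (U1 - L1 + 1)) (at_left x)"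
    and "\<And>j. j \<in> {L2..U2} \<Longrightarrow> (comp Pt j has_real_derivative 1 / real (U2 - L2 + 1)) (at_right x)"
    and "L1 < U2"
  shows "\<forall>j\<in>{L1..U2}. Pt x j = Pt x L1"
proof -
  have "\<forall>q\<in>interior I. q \<in> nondiff_set n I Pt \<longrightarrow>
        (\<forall>lr ur ls us. 1 \<le> lr \<longrightarrow> lr \<le> ur \<longrightarrow> ur \<le> n \<longrightarrow> 1 \<le> ls \<longrightarrow> ls \<le> us \<longrightarrow> us \<le> n \<longrightarrow>
           (\<forall>j\<in>{lr..ur}. (comp Pt j has_real_derivative 1 / real (ur - lr + 1)) (at_left q)) \<longrightarrow>
           (\<forall>j\<in>{ls..us}. (comp Pt j has_real_derivative 1 / real (us - ls + 1)) (at_right q)) \<longrightarrow>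
           lr < us \<longrightarrow> (\<forall>j\<in>{lr..us}. Pt q j = Pt q lr))"
    using gen unfolding gen_n_system_def by (elim conjE)
  with assms show ?thesis by blast
qed

lemma finite_marks_between:
  assumes "a \<in> I" "b \<in> I"
  shows "finite (marks \<inter> {a..b})"
proof (rule finite_inter_if_discrete_in)
  have "discrete_in (nondiff_set n I Pt) I" using gen unfolding gen_n_system_def cont_pw_linear_def by blast
  then show "discrete_in marks I"
    unfolding marks_def by (intro discrete_in_Un D_discrete left_end_marks_discrete right_end_marks_discrete)
  show "{a..b} \<subseteq> I" using mem_is_interval_1_I[OF interval assms] by auto
qed

lemma next_mark_exists:
  assumes x: "x \<in> I" "y \<in> I" "x < y"
  obtains b where "b \<in> marks" "x < b" "\<And>e. e \<in> marks \<Longrightarrow> x < e \<Longrightarrow> b \<le> e"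
proof -
  obtain e0 where "e0 \<in> right_end_marks I \<union> (I \<inter> frontier I)" "x < e0"
    using end_mark_above[OF interval x] by blast
  then have e0: "e0 \<in> marks" "x < e0" by (auto simp: marks_def nondiff_set_def)
  define F where "F = marks \<inter> {x<..e0}"
  have "F \<subseteq> marks \<inter> {x..e0}" by (auto simp: F_def)
  moreover have "e0 \<in> I" using e0 marks_subset by blast
  ultimately have "finite F" using finite_marks_between[OF x(1)] finite_subset by blast
  moreover have "e0 \<in> F" using e0 by (simp add: F_def)
  ultimately have min: "Min F \<in> F" using Min_in by blast
  show ?thesis
  proof (rule that)
    show "Min F \<in> marks" "x < Min F" using min by (auto simp: F_def)
    fix e assume e: "e \<in> marks" "x < e"
    show "Min F \<le> e"
    proof (cases "e \<le> e0")
      case True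
      then have "e \<in> F" using e by (simp add: F_def)
      then show ?thesis using Min_le[OF \<open>finite F\<close>] by blast
    next
      case False
      then show ?thesis using min by (simp add: F_def)
    qed
  qed
qed

lemma prev_mark_exists:
  assumes x: "x \<in> I" "y \<in> I" "y < x"
  obtains a where "a \<in> marks" "a < x" "\<And>e. e \<in> marks \<Longrightarrow> e < x \<Longrightarrow> e \<le> a"
proof -
  obtain e0 where "e0 \<in> left_end_marks I \<union> (I \<inter> frontier I)" "e0 < x"
    using end_mark_below[OF interval bdd x] by blast
  then have e0: "e0 \<in> marks" "e0 < x" by (auto simp: marks_def nondiff_set_def)
  define F where "F = marks \<inter> {e0..<x}"
  have "F \<subseteq> marks \<inter> {e0..x}" by (auto simp: F_def)
  moreover have "e0 \<in> I" using e0 marks_subset by blast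
  ultimately have "finite F" using finite_marks_between[OF _ x(1)] finite_subset by blast
  moreover have "e0 \<in> F" using e0 by (simp add: F_def)
  ultimately have max: "Max F \<in> F" using Max_in by blast
  show ?thesis
  proof (rule that)
    show "Max F \<in> marks" "Max F < x" using max by (auto simp: F_def)
    fix e assume e: "e \<in> marks" "e < x"
    show "e \<le> Max F"
    proof (cases "e0 \<le> e")
      case True
      then have "e \<in> F" using e by (simp add: F_def)
      then show ?thesis using Max_ge[OF \<open>finite F\<close>] by blast
    next
      case False
      then show ?thesis using max by (simp add: F_def)
    qed
  qed
qed

lemma consecutiveI:
  assumes "a \<in> marks" "b \<in> marks" "a < b" "a \<le> x" "x \<le> b"
    and below: "\<And>e. e \<in> marks \<Longrightarrow> e < x \<Longrightarrow> e \<le> a"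
    and above: "\<And>e. e \<in> marks \<Longrightarrow> x < e \<Longrightarrow> b \<le> e"
    and at: "x \<in> marks \<Longrightarrow> x = a \<or> x = b"
  shows "consecutive a b"
  unfolding consecutive_def
proof (intro conjI assms(1-3) equals0I)
  fix e assume e: "e \<in> marks \<inter> {a<..<b}"
  consider "e < x" | "e = x" | "x < e" by linarith
  then show False
  proof cases
    case 1 then show False using below[of e] e by auto
  next
    case 2 then show False using at e by auto
  next
    case 3 then show False using above[of e] e by auto
  qed
qed

lemma consecutive_subset:
  assumes "consecutive a b"
  shows "{a..b} \<subseteq> I"
proof
  fix t assume "t \<in> {a..b}"
  moreover have "a \<in> I" "b \<in> I" using assms marks_subset unfolding consecutive_def by blast+
  ultimately show "t \<in> I" using mem_is_interval_1_I[OF interval \<open>a \<in> I\<close> \<open>b \<in> I\<close>] by simp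
qed

lemma no_mark_between:
  assumes "consecutive a b" "e \<in> marks" "a < e" "e < b"
  shows False
proof -
  have "e \<in> marks \<inter> {a<..<b}" using assms(2-4) by simp
  then show False using assms(1) unfolding consecutive_def by blast
qed

lemma consecutive_unique:
  assumes ab: "consecutive a b" and ab': "consecutive a' b'"
    and t: "a < t" "t < b" "a' < t" "t < b'"
  shows "a = a'" "b = b'"
proof -
  have marks: "a \<in> marks" "a' \<in> marks" "b \<in> marks" "b' \<in> marks"
    using ab ab' unfolding consecutive_def by blast+
  show "a = a'"
  proof (rule ccontr)
    assume "a \<noteq> a'"
    then consider "a < a'" | "a' < a" by linarith
    then show False
    proof cases
      case 1
      moreover have "a' < b" using t by linarith
      ultimately show False using no_mark_between[OF ab marks(2)] by blast
    next
      case 2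
      moreover have "a < b'" using t by linarith
      ultimately show False using no_mark_between[OF ab' marks(1)] by blast
    qed
  qed
  show "b = b'"
  proof (rule ccontr)
    assume "b \<noteq> b'"
    then consider "b < b'" | "b' < b" by linarith
    then show False
    proof cases
      case 1
      moreover have "a' < b" using t by linarith
      ultimately show False using no_mark_between[OF ab' marks(3)] by blast
    next
      case 2
      moreover have "a < b'" using t by linarith
      ultimately show False using no_mark_between[OF ab marks(4)] by blast
    qed
  qed
qed

lemma not_mark_interior:
  assumes "x \<in> I" "x \<notin> marks"
  shows "x \<in> interior I"
proof -
  have "x \<notin> frontier I" using assms nondiff_subset_marks by (auto simp: nondiff_set_def)
  then show ?thesis using assms(1) closure_subset unfolding frontier_def by blast
qed

lemma gap_around_right:
  assumes x: "x \<in> I" "y \<in> I" "x < y"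
  obtains a b where "consecutive a b" "a \<le> x" "x < b" "x \<in> marks \<Longrightarrow> a = x"
proof -
  obtain b where b: "b \<in> marks" "x < b" "\<And>e. e \<in> marks \<Longrightarrow> x < e \<Longrightarrow> b \<le> e"
    using next_mark_exists[OF x] by blast
  show ?thesis
  proof (cases "x \<in> marks")
    case True
    have "consecutive x b" by (rule consecutiveI[of x b x]) (use True b in auto)
    then show ?thesis by (rule that) (use b in auto)
  next
    case False
    then obtain y' where "y' \<in> I" "y' < x"
      using interior_two_sided(1)[OF not_mark_interior[OF x(1)]] by blast
    then obtain a where a: "a \<in> marks" "a < x" "\<And>e. e \<in> marks \<Longrightarrow> e < x \<Longrightarrow> e \<le> a"
      using prev_mark_exists[OF x(1)] by blast
    have "consecutive a b" by (rule consecutiveI[of a b x]) (use False a b in auto)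
    then show ?thesis by (rule that) (use a b False in auto)
  qed
qed

lemma gap_around_left:
  assumes x: "x \<in> I" "y \<in> I" "y < x"
  obtains a b where "consecutive a b" "a < x" "x \<le> b" "x \<in> marks \<Longrightarrow> b = x"
proof -
  obtain a where a: "a \<in> marks" "a < x" "\<And>e. e \<in> marks \<Longrightarrow> e < x \<Longrightarrow> e \<le> a"
    using prev_mark_exists[OF x] by blast
  show ?thesis
  proof (cases "x \<in> marks")
    case True
    have "consecutive a x" by (rule consecutiveI[of a x x]) (use True a in auto)
    then show ?thesis by (rule that) (use a in auto)
  next
    case False
    then obtain y' where "y' \<in> I" "x < y'"
      using interior_two_sided(2)[OF not_mark_interior[OF x(1)]] by blast
    then obtain b where b: "b \<in> marks" "x < b" "\<And>e. e \<in> marks \<Longrightarrow> x < e \<Longrightarrow> b \<le> e"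
      using next_mark_exists[OF x(1)] by blast
    have "consecutive a b" by (rule consecutiveI[of a b x]) (use False a b in auto)
    then show ?thesis by (rule that) (use a b False in auto)
  qed
qed

lemma gap_diff_subinterval:
  assumes ab: "consecutive a b"
  shows "diff_subinterval n I Pt {a<..<b}"
  unfolding diff_subinterval_def
proof (intro conjI ballI)
  have "a < b" and sub: "{a..b} \<subseteq> I" using ab consecutive_subset unfolding consecutive_def by blast+
  show "is_interval {a<..<b}" "open {a<..<b}" by (simp_all add: is_interval_1)
  show "{a<..<b} \<noteq> {}" using \<open>a < b\<close> by simp
  show "{a<..<b} \<subseteq> I" using sub by auto
  fix q j assume q: "q \<in> {a<..<b}" and j: "j \<in> {1..n}"
  have "q \<in> I" using sub q by auto
  moreover have "q \<notin> nondiff_set n I Pt" using no_mark_between[OF ab] q nondiff_subset_marks by auto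
  ultimately show "comp Pt j differentiable (at q)" using j by (simp add: nondiff_set_def)
qed

lemma block_slopes_on_diff_subinterval:
  assumes "diff_subinterval n I Pt H"
  shows "\<exists>L U. 1 \<le> L \<and> L \<le> U \<and> U \<le> n \<and> (\<forall>j\<in>{L..U}. \<forall>x\<in>H. Pt x j = Pt x L) \<and>
           (\<forall>j\<in>{1..n}. \<forall>x\<in>H. \<forall>y\<in>H. Pt y j = Pt x j + (y - x) * block_slope L U j)"
proof -
  obtain L U where LU: "1 \<le> L" "L \<le> U" "U \<le> n"
    and block: "\<forall>j\<in>{L..U}. \<forall>x\<in>H. Pt x j = Pt x L"
    and slope: "\<forall>j\<in>{L..U}. \<forall>x\<in>H. \<forall>y\<in>H. Pt y j - Pt x j = (y - x) / real (U - L + 1)"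
    and flat: "\<forall>j\<in>{1..n}. j \<notin> {L..U} \<longrightarrow> (\<forall>x\<in>H. \<forall>y\<in>H. Pt y j = Pt x j)"
    using gen_block_slopes[OF assms] by blast
  have "Pt y j = Pt x j + (y - x) * block_slope L U j" if j: "j \<in> {1..n}" and xy: "x \<in> H" "y \<in> H" for j x y
  proof (cases "j \<in> {L..U}")
    case True
    then have "Pt y j - Pt x j = (y - x) / real (U - L + 1)" using slope xy by blast
    then have "Pt y j = Pt x j + (y - x) * (1 / real (U - L + 1))" by simp
    with True show ?thesis by (simp add: block_slope_def)
  next
    case False
    then have "Pt y j = Pt x j" using flat j xy by blast
    with False show ?thesis by (auto simp: block_slope_def)
  qed
  with LU block show ?thesis by blast
qed

lemma gap_block:
  assumes ab: "consecutive a b"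
  obtains L U where "1 \<le> L" "L \<le> U" "U \<le> n"
    "\<And>t j. t \<in> {a..b} \<Longrightarrow> j \<in> {1..n} \<Longrightarrow> Pt t j = Pt a j + (t - a) * block_slope L U j"
    "\<And>j. j \<in> {L..U} \<Longrightarrow> Pt a j = Pt a L"
proof -
  define H where "H = {a<..<b}"
  have "a < b" and sub: "{a..b} \<subseteq> I" using ab consecutive_subset unfolding consecutive_def by blast+
  have "diff_subinterval n I Pt H" unfolding H_def by (rule gap_diff_subinterval[OF ab])
  then obtain L U where LU: "1 \<le> L" "L \<le> U" "U \<le> n"
    and block: "\<forall>j\<in>{L..U}. \<forall>x\<in>H. Pt x j = Pt x L"
    and slope: "\<forall>j\<in>{1..n}. \<forall>x\<in>H. \<forall>y\<in>H. Pt y j = Pt x j + (y - x) * block_slope L U j"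
    using block_slopes_on_diff_subinterval by blast
  define m where "m = (a + b) / 2"
  have m: "m \<in> H" using \<open>a < b\<close> by (simp add: H_def m_def)
  have on_gap: "Pt t j = (Pt m j - block_slope L U j * m) + block_slope L U j * t"
    if "t \<in> {a..b}" "j \<in> {1..n}" for t j
  proof (rule affine_on_closed_interval[where f = "\<lambda>t. Pt t j", OF _ \<open>a < b\<close> _ that(1)])
    have "continuous_on {a..b} (comp Pt j)" by (rule continuous_on_subset[OF continuous_Pt[OF that(2)] sub])
    then show "continuous_on {a..b} (\<lambda>t. Pt t j)" by (simp add: comp_def)
    fix t assume "t \<in> {a<..<b}"
    then have "t \<in> H" by (simp add: H_def)
    then have "Pt t j = Pt m j + (t - m) * block_slope L U j" using slope that(2) m by blast
    then show "Pt t j = (Pt m j - block_slope L U j * m) + block_slope L U j * t" by (simp add: algebra_simps)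
  qed
  have "a \<in> {a..b}" using \<open>a < b\<close> by simp
  show ?thesis
  proof (rule that[OF LU])
    fix t j assume "t \<in> {a..b}" "j \<in> {1..n}"
    then show "Pt t j = Pt a j + (t - a) * block_slope L U j"
      using on_gap[of t j] on_gap[of a j] \<open>a \<in> {a..b}\<close> by (simp add: algebra_simps)
  next
    fix j assume j: "j \<in> {L..U}"
    then have "j \<in> {1..n}" "L \<in> {1..n}" "block_slope L U j = block_slope L U L" using LU
      by (auto simp: block_slope_def)
    moreover have "Pt m j = Pt m L" using block j m by blast
    ultimately show "Pt a j = Pt a L" using on_gap[of a j] on_gap[of a L] \<open>a \<in> {a..b}\<close> by simp
  qed
qed

lemma gap_stair_gap:
  assumes ab: "consecutive a b"
  shows "stair_gap n a b (Pt a) (Pt b)"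
proof
  obtain L U where "1 \<le> L" "L \<le> U" "U \<le> n"
    and affine: "\<And>t j. t \<in> {a..b} \<Longrightarrow> j \<in> {1..n} \<Longrightarrow> Pt t j = Pt a j + (t - a) * block_slope L U j"
    and "\<And>j. j \<in> {L..U} \<Longrightarrow> Pt a j = Pt a L"
    using gap_block[OF ab] by metis
  have "a < b" using ab unfolding consecutive_def by blast
  show "Pt a j \<le> Pt b j" if "j \<in> {1..n}" for j
    using affine[of b j] that \<open>a < b\<close> block_slope_nonneg[of L U j] by simp
  have "a \<in> I" "b \<in> I" using ab marks_subset unfolding consecutive_def by blast+
  then show "(\<Sum>j=1..n. Pt b j) - (\<Sum>j=1..n. Pt a j) = b - a"
    using ordered_sum_Pt unfolding ordered_sum_def by simp
qed

text \<open>Only used at points that are not marks, where the enclosing gap is unique.\<close>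
definition gap_of :: "real \<Rightarrow> real \<times> real" where
  "gap_of t = (SOME (a, b). consecutive a b \<and> a < t \<and> t < b)"

definition refined :: "real \<Rightarrow> nat \<Rightarrow> real" where
  "refined t j = (if t \<in> marks then Pt t j else (case gap_of t of (a, b) \<Rightarrow> staircase n a (Pt a) (Pt b) t j))"

lemma gap_of_eq:
  assumes "consecutive a b" "a < t" "t < b"
  shows "gap_of t = (a, b)"
proof -
  have "consecutive (fst (gap_of t)) (snd (gap_of t)) \<and> fst (gap_of t) < t \<and> t < snd (gap_of t)"
    unfolding gap_of_def by (rule someI2[of _ "(a, b)"]) (use assms in auto)
  then show ?thesis using consecutive_unique[OF assms(1) _ assms(2,3)] by (metis prod.collapse)
qed

lemma refined_on_gap:
  assumes ab: "consecutive a b" and t: "t \<in> {a..b}" and j: "j \<in> {1..n}"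
  shows "refined t j = staircase n a (Pt a) (Pt b) t j"
proof -
  interpret stair_gap n a b "Pt a" "Pt b" by (rule gap_stair_gap[OF ab])
  have marks: "a \<in> marks" "b \<in> marks" using ab unfolding consecutive_def by blast+
  consider "t = a" | "t = b" | "a < t" "t < b" using t by fastforce
  then show ?thesis
  proof cases
    case 1 then show ?thesis using marks staircase_start[OF j] by (simp add: refined_def)
  next
    case 2 then show ?thesis using marks staircase_end[OF j] by (simp add: refined_def)
  next
    case 3
    then have "t \<notin> marks" using no_mark_between[OF ab] by blast
    with 3 show ?thesis using gap_of_eq[OF ab] by (simp add: refined_def)
  qed
qed

lemma refined_ordered_sum: "ordered_sum n I refined"
  unfolding ordered_sum_def
proof
  fix q assume q: "q \<in> I"
  show "0 \<le> refined q 1 \<and> (\<forall>j\<in>{1..<n}. refined q j \<le> refined q (Suc j)) \<and> (\<Sum>j=1..n. refined q j) = q"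
  proof (cases "q \<in> marks")
    case True
    then have "refined q = Pt q" by (simp add: refined_def fun_eq_iff)
    then show ?thesis using ordered_sum_Pt q unfolding ordered_sum_def by simp
  next
    case False
    obtain y where "y \<in> I" "q < y"
      using interior_two_sided(2)[OF not_mark_interior[OF q False]] by blast
    then obtain a b where ab: "consecutive a b" "a \<le> q" "q < b"
      using gap_around_right[OF q] by metis
    interpret stair_gap n a b "Pt a" "Pt b" by (rule gap_stair_gap[OF ab(1)])
    have "1 \<le> n" using dimension_pos ab(2,3) by simp
    have eq: "refined q j = staircase n a (Pt a) (Pt b) q j" if "j \<in> {1..n}" for j
      using refined_on_gap[OF ab(1) _ that] ab(2,3) by simp
    have "a \<in> I" "b \<in> I" using ab(1) marks_subset unfolding consecutive_def by blast+
    then have a: "0 \<le> Pt a 1" "\<forall>j\<in>{1..<n}. Pt a j \<le> Pt a (Suc j)" "(\<Sum>j=1..n. Pt a j) = a"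
      and b: "\<forall>j\<in>{1..<n}. Pt b j \<le> Pt b (Suc j)"
      using ordered_sum_Pt unfolding ordered_sum_def by simp_all
    have "0 \<le> refined q 1" using eq[of 1] staircase_bounds[of 1 q] a(1) \<open>1 \<le> n\<close> by simp
    moreover have "refined q j \<le> refined q (Suc j)" if "j \<in> {1..<n}" for j
      using eq[of j] eq[of "Suc j"] staircase_sorted[OF that] a(2) b that by simp
    moreover have "(\<Sum>j=1..n. refined q j) = (\<Sum>j=1..n. staircase n a (Pt a) (Pt b) q j)"
      using eq by (intro sum.cong) simp_all
    then have "(\<Sum>j=1..n. refined q j) = q" using staircase_sum[of q] ab(2,3) a(3) by simp
    ultimately show ?thesis by blast
  qed
qed

lemma refined_moves_right:
  assumes ab: "consecutive a b" and x: "a \<le> x" "x < b"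
  obtains r where "unit_move n I refined x {x<..} r"
    "tail_increment n (Pt a) (Pt b) (Suc r) \<le> x - a" "x - a < tail_increment n (Pt a) (Pt b) r"
proof -
  interpret stair_gap n a b "Pt a" "Pt b" by (rule gap_stair_gap[OF ab])
  obtain r where r: "unit_move n {a..b} (staircase n a (Pt a) (Pt b)) x {x<..} r"
    "tail_increment n (Pt a) (Pt b) (Suc r) \<le> x - a" "x - a < tail_increment n (Pt a) (Pt b) r"
    using staircase_moves_right[OF x] by metis
  have "unit_move n I refined x {x<..} r"
    by (rule unit_move_transfer[OF r(1) consecutive_subset[OF ab]]) (use x refined_on_gap[OF ab] in auto)
  from this r(2,3) show ?thesis by (rule that)
qed

lemma refined_moves_left:
  assumes ab: "consecutive a b" and x: "a < x" "x \<le> b"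
  obtains r where "unit_move n I refined x {..<x} r"
    "tail_increment n (Pt a) (Pt b) (Suc r) < x - a" "x - a \<le> tail_increment n (Pt a) (Pt b) r"
proof -
  interpret stair_gap n a b "Pt a" "Pt b" by (rule gap_stair_gap[OF ab])
  obtain r where r: "unit_move n {a..b} (staircase n a (Pt a) (Pt b)) x {..<x} r"
    "tail_increment n (Pt a) (Pt b) (Suc r) < x - a" "x - a \<le> tail_increment n (Pt a) (Pt b) r"
    using staircase_moves_left[OF x] by metis
  have "unit_move n I refined x {..<x} r"
    by (rule unit_move_transfer[OF r(1) consecutive_subset[OF ab]]) (use x refined_on_gap[OF ab] in auto)
  from this r(2,3) show ?thesis by (rule that)
qed

lemma gap_increase_iff:
  assumes "a < b" "\<And>t j. t \<in> {a..b} \<Longrightarrow> j \<in> {1..n} \<Longrightarrow> Pt t j = Pt a j + (t - a) * block_slope L U j"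
    and "j \<in> {1..n}"
  shows "Pt a j < Pt b j \<longleftrightarrow> L \<le> j \<and> j \<le> U"
proof -
  have "Pt b j = Pt a j + (b - a) * block_slope L U j" using assms(1,3) assms(2)[of b j] by simp
  then show ?thesis using assms(1) block_slope_pos_iff[of L U j] by (simp add: zero_less_mult_iff)
qed

lemma left_mover_at_mark:
  assumes gap: "consecutive a x" and LU: "1 \<le> L" "L \<le> U" "U \<le> n"
    and affine: "\<And>t j. t \<in> {a..x} \<Longrightarrow> j \<in> {1..n} \<Longrightarrow> Pt t j = Pt a j + (t - a) * block_slope L U j"
    and r: "unit_move n I refined x {..<x} r"
  shows "r = L"
proof -
  have "a < x" using gap unfolding consecutive_def by blast
  interpret stair_gap n a x "Pt a" "Pt x" by (rule gap_stair_gap[OF gap])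
  obtain r' where r': "unit_move n I refined x {..<x} r'" "T (Suc r') < x - a" "x - a \<le> T r'"
    using refined_moves_left[OF gap \<open>a < x\<close> order_refl] by metis
  have "r = r'" using unit_move_unique[OF _ r r'(1)] by simp
  have "r' \<in> {1..n}" using r'(1) unfolding unit_move_def by blast
  note mover = left_mover_at_end[OF this r'(2,3)]
  have increase: "Pt a j < Pt x j \<longleftrightarrow> L \<le> j \<and> j \<le> U" if "j \<in> {1..n}" for j
    by (rule gap_increase_iff[OF \<open>a < x\<close> affine that])
  have "L \<le> r'" using mover(1) increase \<open>r' \<in> {1..n}\<close> by simp
  moreover have "\<not> L < r'"
  proof
    assume "L < r'"
    then have "Pt a L = Pt x L" using mover(2)[of L] LU by simp
    moreover have "Pt a L < Pt x L" using increase[of L] LU by simp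
    ultimately show False by simp
  qed
  ultimately show ?thesis using \<open>r = r'\<close> by simp
qed

lemma right_mover_at_mark:
  assumes gap: "consecutive x b" and LU: "1 \<le> L" "L \<le> U" "U \<le> n"
    and affine: "\<And>t j. t \<in> {x..b} \<Longrightarrow> j \<in> {1..n} \<Longrightarrow> Pt t j = Pt x j + (t - x) * block_slope L U j"
    and s: "unit_move n I refined x {x<..} s"
  shows "s = U"
proof -
  have "x < b" using gap unfolding consecutive_def by blast
  interpret stair_gap n x b "Pt x" "Pt b" by (rule gap_stair_gap[OF gap])
  obtain s' where s': "unit_move n I refined x {x<..} s'" "T (Suc s') \<le> x - x" "x - x < T s'"
    using refined_moves_right[OF gap order_refl \<open>x < b\<close>] by metis
  have "s = s'" using unit_move_unique[OF _ s s'(1)] by simp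
  have "s' \<in> {1..n}" using s'(1) unfolding unit_move_def by blast
  have mover: "Pt x s' < Pt b s'" "\<And>j. j \<in> {s'<..n} \<Longrightarrow> Pt x j = Pt b j"
    using right_mover_at_start[OF \<open>s' \<in> {1..n}\<close>] s'(2,3) by simp_all
  have increase: "Pt x j < Pt b j \<longleftrightarrow> L \<le> j \<and> j \<le> U" if "j \<in> {1..n}" for j
    by (rule gap_increase_iff[OF \<open>x < b\<close> affine that])
  have "s' \<le> U" using mover(1) increase \<open>s' \<in> {1..n}\<close> by simp
  moreover have "\<not> s' < U"
  proof
    assume "s' < U"
    then have "Pt x U = Pt b U" using mover(2)[of U] LU by simp
    moreover have "Pt x U < Pt b U" using increase[of U] LU by simp
    ultimately show False by simp
  qed
  ultimately show ?thesis using \<open>s = s'\<close> by simp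
qed

lemma block_junction:
  assumes x: "x \<in> interior I" and "a < x" "x < b"
    and LU1: "1 \<le> L1" "L1 \<le> U1" "U1 \<le> n"
    and affine1: "\<And>t j. t \<in> {a..x} \<Longrightarrow> j \<in> {1..n} \<Longrightarrow> Pt t j = Pt a j + (t - a) * block_slope L1 U1 j"
    and block1: "\<And>j. j \<in> {L1..U1} \<Longrightarrow> Pt a j = Pt a L1"
    and LU2: "1 \<le> L2" "L2 \<le> U2" "U2 \<le> n"
    and affine2: "\<And>t j. t \<in> {x..b} \<Longrightarrow> j \<in> {1..n} \<Longrightarrow> Pt t j = Pt x j + (t - x) * block_slope L2 U2 j"
    and "L1 < U2"
  shows "\<forall>j\<in>{L1..U2}. Pt x j = Pt x L1"
proof -
  have left: "(comp Pt j has_real_derivative block_slope L1 U1 j) (at_left x)" if j: "j \<in> {1..n}" for j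
  proof (rule affine_has_left_derivative[OF \<open>a < x\<close>])
    fix y assume "y \<in> {a<..<x}"
    then show "comp Pt j y = comp Pt j x + (y - x) * block_slope L1 U1 j"
      using affine1[of y j] affine1[of x j] j \<open>a < x\<close> by (simp add: comp_def algebra_simps)
  qed
  have right: "(comp Pt j has_real_derivative block_slope L2 U2 j) (at_right x)" if j: "j \<in> {1..n}" for j
  proof (rule affine_has_right_derivative[OF \<open>x < b\<close>])
    fix y assume "y \<in> {x<..<b}"
    then show "comp Pt j y = comp Pt j x + (y - x) * block_slope L2 U2 j"
      using affine2[of y j] j by (simp add: comp_def algebra_simps)
  qed
  show ?thesis
  proof (cases "x \<in> nondiff_set n I Pt")
    case True
    show ?thesis
    proof (rule gen_junction[OF x True LU1 LU2 _ _ \<open>L1 < U2\<close>])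
      fix j assume "j \<in> {L1..U1}"
      then show "(comp Pt j has_real_derivative 1 / real (U1 - L1 + 1)) (at_left x)"
        using left[of j] LU1 by (simp add: block_slope_def)
    next
      fix j assume "j \<in> {L2..U2}"
      then show "(comp Pt j has_real_derivative 1 / real (U2 - L2 + 1)) (at_right x)"
        using right[of j] LU2 by (simp add: block_slope_def)
    qed
  next
    case False
    have "block_slope L1 U1 j = block_slope L2 U2 j" if j: "j \<in> {1..n}" for j
      using False x interior_subset j one_sided_derivatives_eq[OF _ left[OF j] right[OF j]]
      by (auto simp: nondiff_set_def)
    then have "L1 = L2" "U1 = U2" using block_slope_inject[OF LU1 LU2] by blast+
    show ?thesis
    proof
      fix j assume "j \<in> {L1..U2}"
      then have j: "j \<in> {L1..U1}" "j \<in> {1..n}" using \<open>U1 = U2\<close> LU1 by auto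
      have "L1 \<in> {1..n}" "x \<in> {a..x}" using LU1 \<open>a < x\<close> by auto
      then show "Pt x j = Pt x L1"
        using affine1[of x j] affine1[of x L1] block1[OF j(1)] j by (simp add: block_slope_def)
    qed
  qed
qed

lemma refined_moves_off_marks:
  assumes x: "x \<in> interior I" "x \<notin> marks"
    and r: "unit_move n I refined x {..<x} r" and s: "unit_move n I refined x {x<..} s"
  shows "s \<le> r"
proof -
  have xI: "x \<in> I" using x interior_subset by blast
  obtain yr where yr: "yr \<in> I" "x < yr" using interior_two_sided(2)[OF x(1)] by blast
  obtain a b where ab: "consecutive a b" "a \<le> x" "x < b" "x \<in> marks \<Longrightarrow> a = x"
    using gap_around_right[OF xI yr] by metis
  have "a \<in> marks" using ab(1) unfolding consecutive_def by blast
  with x(2) ab(2) have "a < x" by (cases "a = x") auto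
  interpret stair_gap n a b "Pt a" "Pt b" by (rule gap_stair_gap[OF ab(1)])
  obtain r' where r': "unit_move n I refined x {..<x} r'" "T (Suc r') < x - a" "x - a \<le> T r'"
    using refined_moves_left[OF ab(1) \<open>a < x\<close> less_imp_le[OF ab(3)]] by metis
  obtain s' where s': "unit_move n I refined x {x<..} s'" "T (Suc s') \<le> x - a" "x - a < T s'"
    using refined_moves_right[OF ab(1-3)] by metis
  have "r = r'" using unit_move_unique[OF _ r r'(1)] by simp
  have "s = s'" using unit_move_unique[OF _ s s'(1)] by simp
  have "1 \<le> r'" using r'(1) unfolding unit_move_def by simp
  show "s \<le> r"
  proof (rule ccontr)
    assume "\<not> s \<le> r"
    then have "T s \<le> T (Suc r')" using tail_antimono[of "Suc r'" s] \<open>r = r'\<close> by simp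
    then show False using r'(2) s'(3) \<open>s = s'\<close> by simp
  qed
qed

lemma refined_junction:
  assumes x: "x \<in> interior I" and r: "unit_move n I refined x {..<x} r"
    and s: "unit_move n I refined x {x<..} s" and "r < s"
  shows "\<forall>j\<in>{r..s}. refined x j = refined x r"
proof -
  have "x \<in> marks" using refined_moves_off_marks[OF x _ r s] \<open>r < s\<close> by linarith
  have xI: "x \<in> I" using x interior_subset by blast
  obtain yl yr where yl: "yl \<in> I" "yl < x" and yr: "yr \<in> I" "x < yr" using interior_two_sided[OF x] by blast
  obtain a b' where "consecutive a b'" "a < x" "x \<le> b'" "x \<in> marks \<Longrightarrow> b' = x"
    using gap_around_left[OF xI yl] by metis
  with \<open>x \<in> marks\<close> have gap1: "consecutive a x" by simp
  obtain a' b where "consecutive a' b" "a' \<le> x" "x < b" "x \<in> marks \<Longrightarrow> a' = x"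
    using gap_around_right[OF xI yr] by metis
  with \<open>x \<in> marks\<close> have gap2: "consecutive x b" by simp
  have "a < x" "x < b" using gap1 gap2 unfolding consecutive_def by blast+
  obtain L1 U1 where LU1: "1 \<le> L1" "L1 \<le> U1" "U1 \<le> n"
    and affine1: "\<And>t j. t \<in> {a..x} \<Longrightarrow> j \<in> {1..n} \<Longrightarrow> Pt t j = Pt a j + (t - a) * block_slope L1 U1 j"
    and block1: "\<And>j. j \<in> {L1..U1} \<Longrightarrow> Pt a j = Pt a L1"
    using gap_block[OF gap1] by metis
  obtain L2 U2 where LU2: "1 \<le> L2" "L2 \<le> U2" "U2 \<le> n"
    and affine2: "\<And>t j. t \<in> {x..b} \<Longrightarrow> j \<in> {1..n} \<Longrightarrow> Pt t j = Pt x j + (t - x) * block_slope L2 U2 j"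
    and "\<And>j. j \<in> {L2..U2} \<Longrightarrow> Pt x j = Pt x L2"
    using gap_block[OF gap2] by metis
  have "r = L1" by (rule left_mover_at_mark[OF gap1 LU1 affine1 r])
  moreover have "s = U2" by (rule right_mover_at_mark[OF gap2 LU2 affine2 s])
  ultimately have const: "\<forall>j\<in>{r..s}. Pt x j = Pt x r"
    using \<open>r < s\<close> block_junction[OF x \<open>a < x\<close> \<open>x < b\<close> LU1 affine1 block1 LU2 affine2] by blast
  show ?thesis
  proof
    fix j assume "j \<in> {r..s}"
    then have "Pt x j = Pt x r" using const by blast
    then show "refined x j = refined x r" using \<open>x \<in> marks\<close> by (simp add: refined_def)
  qed
qed

lemma refined_n_system: "n_system n I refined"
proof -
  interpret unit_moves n I refined
  proof
    fix x y assume xy: "x \<in> I" "y \<in> I" "y < x"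
    obtain a b where ab: "consecutive a b" "a < x" "x \<le> b" "x \<in> marks \<Longrightarrow> b = x"
      using gap_around_left[OF xy] by metis
    show "\<exists>r. unit_move n I refined x {..<x} r" by (rule refined_moves_left[OF ab(1-3)]) blast
  next
    fix x y assume xy: "x \<in> I" "y \<in> I" "x < y"
    obtain a b where ab: "consecutive a b" "a \<le> x" "x < b" "x \<in> marks \<Longrightarrow> a = x"
      using gap_around_right[OF xy] by metis
    show "\<exists>r. unit_move n I refined x {x<..} r" by (rule refined_moves_right[OF ab(1-3)]) blast
  qed
  show ?thesis by (rule n_system[OF refined_ordered_sum refined_junction])
qed

lemma refined_eq_on_D: "t \<in> D \<Longrightarrow> refined t j = Pt t j"
  by (simp add: refined_def marks_def)

end

theorem mainTheorem5:
  fixes n :: nat and I D :: "real set" and Pt :: "real \<Rightarrow> nat \<Rightarrow> real"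
  assumes "n \<ge> 2"
    and "is_interval I" and "I \<subseteq> {0..}" and "interior I \<noteq> {}"
    and "gen_n_system n I Pt"
    and "D \<subseteq> I" and "discrete_in D I"
  shows "\<exists>P. n_system n I P \<and> (\<forall>t\<in>D. \<forall>j\<in>{1..n}. P t j = Pt t j)"
proof -
  have "bdd_below I" using assms(3) by (auto intro: bdd_belowI[of _ 0])
  then interpret refinement n I D Pt using assms(2,5-7) by unfold_locales
  show ?thesis using refined_n_system refined_eq_on_D by blast
qed

end
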